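(* Let $n\ge2$. Every $f\in\mathcal{E}$ admits a smooth extension $\widetilde f$ to $\mathbb{C}^{n+1}\setminus\{0\}$, homogeneous of degree $(0,0)$, with $\widetilde f|_{\mathcal{N}}=f$ and $\Delta\widetilde f=O(L^{n-1})$. Such an $\widetilde f$ is unique modulo $O(L^n)$: if $\widetilde f,\widetilde f'$ are two such extensions then $\widetilde f-\widetilde f'=O(L^n)$.
   Context: On $\mathbb{C}^{n+1}$ with coordinates $\zeta=(\zeta_0,\dots,\zeta_n)$ put $L(\zeta)=|\zeta_0|^2-\sum_{j=1}^n|\zeta_j|^2$, $\mathcal{N}=\{\zeta\ne0:L(\zeta)=0\}$, $\Delta=\partial_{\zeta_0}\partial_{\bar\zeta_0}-\sum_{j=1}^n\partial_{\zeta_j}\partial_{\bar\zeta_j}$. Homogeneous of degree $(p,q)$ means $\widetilde f(\lambda\zeta)=\lambda^p\bar\lambda^q\widetilde f(\zeta)$ for $\lambda\in\mathbb{C}^*$. $\mathcal{E}=\{f\in C^\infty(\mathcal{N},\mathbb{R}):f(\lambda\zeta)=f(\zeta)\ \forall\lambda\in\mathbb{C}^*\}$. For a function $u$ on $\mathbb{C}^{n+1}\setminus\{0\}$, $u=O(L^k)$ means $u=L^kh$ for some smooth $h$ on $\mathbb{C}^{n+1}\setminus\{0\}$. *)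

theory Defs
  imports "HOL-Analysis.Analysis"
begin

text \<open>Points of C^(n+1) are pairs (zeta_0, (zeta_1,...,zeta_n)) with n = CARD('n).\<close>
type_synonym 'n pt = "complex \<times> (complex ^ 'n)"

definition Lform :: "'n::finite pt \<Rightarrow> real" where
  "Lform z = (cmod (fst z))^2 - (\<Sum>j\<in>UNIV. (cmod (snd z $ j))^2)"

definition nullcone :: "'n::finite pt set" where
  "nullcone = {z. z \<noteq> 0 \<and> Lform z = 0}"

definition cscale :: "complex \<Rightarrow> 'n::finite pt \<Rightarrow> 'n pt" where
  "cscale c z = (c * fst z, \<chi> j. c * (snd z $ j))"

text \<open>Iterated directional (Frechet) derivatives; last element of the list is applied first.\<close>
fun dirderivs :: "'a::real_normed_vector list \<Rightarrow> ('a \<Rightarrow> 'b::real_normed_vector) \<Rightarrow> 'a \<Rightarrow> 'b" where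
  "dirderivs [] u = u"
| "dirderivs (v # vs) u = (\<lambda>x. frechet_derivative (dirderivs vs u) (at x) v)"

definition smooth_on :: "'a::real_normed_vector set \<Rightarrow> ('a \<Rightarrow> 'b::real_normed_vector) \<Rightarrow> bool" where
  "smooth_on S u \<longleftrightarrow> open S \<and> (\<forall>vs. dirderivs vs u differentiable_on S)"

definition smooth_on_subset :: "'a::real_normed_vector set \<Rightarrow> ('a \<Rightarrow> 'b::real_normed_vector) \<Rightarrow> bool" where
  "smooth_on_subset N u \<longleftrightarrow>
     (\<forall>x\<in>N. \<exists>U g. open U \<and> x \<in> U \<and> smooth_on U g \<and> (\<forall>y\<in>U \<inter> N. g y = u y))"

text \<open>The space E: smooth real functions on N, invariant under C^* scaling
  (values off N are irrelevant).\<close>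
definition Espace :: "('n::finite pt \<Rightarrow> real) set" where
  "Espace = {f. smooth_on_subset nullcone f \<and>
      (\<forall>z\<in>nullcone. \<forall>c. c \<noteq> 0 \<longrightarrow> f (cscale c z) = f z)}"

definition homog00 :: "('n::finite pt \<Rightarrow> real) \<Rightarrow> bool" where
  "homog00 u \<longleftrightarrow> (\<forall>z. z \<noteq> 0 \<longrightarrow> (\<forall>c. c \<noteq> 0 \<longrightarrow> u (cscale c z) = u z))"

definition d2 :: "'a::real_normed_vector \<Rightarrow> ('a \<Rightarrow> real) \<Rightarrow> 'a \<Rightarrow> real" where
  "d2 v u = dirderivs [v, v] u"

text \<open>Delta = d_{z0} d_{bar z0} - sum_j d_{zj} d_{bar zj}; each d_z d_{bar z} = (1/4)(d_x^2 + d_y^2).\<close>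
definition Delta :: "('n::finite pt \<Rightarrow> real) \<Rightarrow> 'n pt \<Rightarrow> real" where
  "Delta u x = (1/4) * ((d2 (1, 0) u x + d2 (\<i>, 0) u x)
     - (\<Sum>j\<in>UNIV. d2 (0, axis j 1) u x + d2 (0, axis j \<i>) u x))"

definition bigOL :: "nat \<Rightarrow> ('n::finite pt \<Rightarrow> real) \<Rightarrow> bool" where
  "bigOL k u \<longleftrightarrow> (\<exists>h. smooth_on (- {0}) h \<and> (\<forall>z. z \<noteq> 0 \<longrightarrow> u z = (Lform z)^k * h z))"

definition good_ext :: "('n::finite pt \<Rightarrow> real) \<Rightarrow> ('n pt \<Rightarrow> real) \<Rightarrow> bool" where
  "good_ext f F \<longleftrightarrow> smooth_on (- {0}) F \<and> homog00 F \<and> (\<forall>z\<in>nullcone. F z = f z)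
     \<and> bigOL (CARD('n) - 1) (Delta F)"

end

theory Submission
  imports Defs "HOL-Computational_Algebra.Polynomial"
begin

text \<open>
  On \<open>\<zeta>\<^sub>0 \<noteq> 0 \<noteq> \<zeta>'\<close> the map \<open>(\<zeta>\<^sub>0, \<zeta>') \<mapsto> (\<zeta>\<^sub>0/|\<zeta>\<^sub>0|, \<zeta>'/|\<zeta>'|)\<close> retracts onto the
  null cone and commutes with \<open>\<complex>\<^sup>*\<close>, so \<open>f\<close> composed with it and multiplied by an
  invariant cutoff is a smooth extension of degree \<open>(0,0)\<close>. Improving it rests on one
  identity: if \<open>e\<close> is homogeneous of degree \<open>(-m,-m)\<close>, then
  \<open>Delta (L\<^sup>m e) = m (n - m) L\<^sup>m\<^sup>-\<^sup>1 e + L\<^sup>m Delta e\<close>. Since \<open>Delta\<close> lowers degrees by \<open>(1,1)\<close>,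
  writing \<open>Delta F = L\<^sup>k e\<close> makes \<open>e\<close> homogeneous of degree \<open>(-(k+1),-(k+1))\<close>, and
  subtracting \<open>L\<^sup>k\<^sup>+\<^sup>1 e / ((k+1)(n-k-1))\<close> from \<open>F\<close> gives \<open>Delta F = O(L\<^sup>k\<^sup>+\<^sup>1)\<close>, which works
  until \<open>k + 1 = n\<close>. For uniqueness the identity is read backwards: if the difference \<open>G\<close>
  of two extensions is \<open>L\<^sup>k h\<close> with \<open>0 < k < n\<close>, then \<open>Delta G = O(L\<^sup>n\<^sup>-\<^sup>1)\<close> forces \<open>h\<close> to
  vanish on the null cone, and a Hadamard-type division lemma gives \<open>G = O(L\<^sup>k\<^sup>+\<^sup>1)\<close>.
\<close>

section \<open>Smooth functions\<close>

abbreviation dirderiv :: "('a::real_normed_vector \<Rightarrow> real) \<Rightarrow> 'a \<Rightarrow> 'a \<Rightarrow> real" where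
  "dirderiv u x v \<equiv> frechet_derivative u (at x) v"

lemma frechet_derivative_cong_open:
  assumes "open S" "x \<in> S" "\<And>y. y \<in> S \<Longrightarrow> f y = g y"
  shows "frechet_derivative f (at x) = frechet_derivative g (at x)"
proof -
  have "\<And>f'. (f has_derivative f') (at x) \<longleftrightarrow> (g has_derivative f') (at x)"
    using assms has_derivative_transform_within_open by metis
  then show ?thesis unfolding frechet_derivative_def by simp
qed

lemma dirderivs_cong_open:
  assumes "open S" "\<And>y. y \<in> S \<Longrightarrow> f y = g y" "x \<in> S"
  shows "dirderivs vs f x = dirderivs vs g x"
  using assms(3)
proof (induction vs arbitrary: x)
  case (Cons v vs)
  have "frechet_derivative (dirderivs vs f) (at x) = frechet_derivative (dirderivs vs g) (at x)"
    by (rule frechet_derivative_cong_open[OF assms(1) Cons.prems]) (use Cons.IH in auto)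
  then show ?case by simp
qed (use assms in simp)

lemma dirderivs_snoc: "dirderivs (vs @ [w]) u = dirderivs vs (\<lambda>x. dirderiv u x w)"
  by (induction vs) auto

lemma differentiable_on_cong_open:
  assumes "open S" "f differentiable_on S" "\<And>y. y \<in> S \<Longrightarrow> f y = g y"
  shows "g differentiable_on S"
  using assms unfolding differentiable_on_eq_differentiable_at[OF assms(1)] differentiable_def
  by (metis has_derivative_transform_within_open)

lemma smooth_on_open: "smooth_on S u \<Longrightarrow> open S"
  by (simp add: smooth_on_def)

lemma smooth_on_differentiable_on: "smooth_on S u \<Longrightarrow> u differentiable_on S"
  unfolding smooth_on_def by (metis dirderivs.simps(1))

lemma smooth_on_differentiable_at: "smooth_on S u \<Longrightarrow> x \<in> S \<Longrightarrow> u differentiable (at x)"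
  using smooth_on_differentiable_on smooth_on_open differentiable_on_eq_differentiable_at by blast

lemma smooth_on_continuous_on: "smooth_on S u \<Longrightarrow> continuous_on S u"
  using smooth_on_differentiable_on differentiable_imp_continuous_on by blast

lemma smooth_on_dirderiv: "smooth_on S u \<Longrightarrow> smooth_on S (\<lambda>x. dirderiv u x w)"
  unfolding smooth_on_def by (metis dirderivs_snoc)

lemma smooth_on_cong:
  assumes "smooth_on S u" "\<And>x. x \<in> S \<Longrightarrow> u x = v x"
  shows "smooth_on S v"
  unfolding smooth_on_def
proof (intro conjI allI)
  show "open S" using assms smooth_on_open by blast
  show "dirderivs vs v differentiable_on S" for vs
    by (rule differentiable_on_cong_open[OF \<open>open S\<close>, of "dirderivs vs u"])
      (use assms in \<open>auto simp: smooth_on_def intro: dirderivs_cong_open[OF \<open>open S\<close>]\<close>)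
qed

lemma smooth_on_local:
  assumes "open S" "\<And>x. x \<in> S \<Longrightarrow> \<exists>T. open T \<and> x \<in> T \<and> smooth_on T u"
  shows "smooth_on S u"
  unfolding smooth_on_def
proof (intro conjI allI)
  show "dirderivs vs u differentiable_on S" for vs
    unfolding differentiable_on_eq_differentiable_at[OF assms(1)]
    using assms(2) unfolding smooth_on_def
    using differentiable_on_eq_differentiable_at by blast
qed (rule assms(1))

lemma smooth_on_open_subset: "smooth_on S u \<Longrightarrow> open T \<Longrightarrow> T \<subseteq> S \<Longrightarrow> smooth_on T u"
  unfolding smooth_on_def using differentiable_on_subset by blast

lemma smooth_on_coinduct:
  assumes S: "open S" and "P u"
    and differentiable: "\<And>u. P u \<Longrightarrow> u differentiable_on S"
    and dirderiv: "\<And>u w. P u \<Longrightarrow> \<exists>u'. P u' \<and> (\<forall>x\<in>S. dirderiv u x w = u' x)"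
  shows "smooth_on S u"
proof -
  have *: "\<exists>u'. P u' \<and> (\<forall>x\<in>S. dirderivs vs u x = u' x)" if "P u" for vs u
    using that
  proof (induction vs arbitrary: u)
    case (Cons v vs)
    then obtain u' where u': "P u'" "\<forall>x\<in>S. dirderivs vs u x = u' x" by blast
    then obtain u'' where u'': "P u''" "\<forall>x\<in>S. dirderiv u' x v = u'' x"
      using dirderiv by blast
    have "\<forall>x\<in>S. dirderivs (v # vs) u x = u'' x"
    proof
      fix x assume "x \<in> S"
      have "frechet_derivative (dirderivs vs u) (at x) = frechet_derivative u' (at x)"
        by (rule frechet_derivative_cong_open[OF S \<open>x \<in> S\<close>]) (use u' in auto)
      then show "dirderivs (v # vs) u x = u'' x" using u'' \<open>x \<in> S\<close> by simp
    qed
    then show ?case using u'' by blast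
  qed auto
  show ?thesis
    unfolding smooth_on_def
  proof (intro conjI allI)
    fix vs
    obtain u' where "P u'" "\<forall>x\<in>S. dirderivs vs u x = u' x"
      using * \<open>P u\<close> by blast
    then show "dirderivs vs u differentiable_on S"
      using differentiable_on_cong_open[OF S differentiable[OF \<open>P u'\<close>]] by metis
  qed (rule S)
qed

lemma smooth_on_by_dirderiv:
  assumes S: "open S" and "u differentiable_on S"
    and "\<And>w. \<exists>u'. smooth_on S u' \<and> (\<forall>x\<in>S. dirderiv u x w = u' x)"
  shows "smooth_on S u"
proof (rule smooth_on_coinduct[where P="\<lambda>v. v = u \<or> smooth_on S v", OF S])
  fix v w assume "v = u \<or> smooth_on S v"
  then show "\<exists>u'. (u' = u \<or> smooth_on S u') \<and> (\<forall>x\<in>S. dirderiv v x w = u' x)"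
    using assms(3) smooth_on_dirderiv by blast
qed (use assms(2) smooth_on_differentiable_on in auto)

lemma smooth_on_affine:
  fixes l :: "'a::real_normed_vector \<Rightarrow> real"
  assumes "open S" "bounded_linear l"
  shows "smooth_on S (\<lambda>x. l x + c)"
proof (rule smooth_on_coinduct[where P="\<lambda>u. \<exists>l c. bounded_linear l \<and> u = (\<lambda>x. l x + c)"])
  fix u :: "'a \<Rightarrow> real" and w
  assume "\<exists>l c. bounded_linear l \<and> u = (\<lambda>x. l x + c)"
  then obtain l c where lc: "bounded_linear l" "u = (\<lambda>x. l x + c)" by blast
  have d: "(u has_derivative l) (at x)" for x
    using lc by (auto intro!: derivative_eq_intros bounded_linear_imp_has_derivative)
  then show "u differentiable_on S"
    by (meson differentiable_at_imp_differentiable_on differentiable_def)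
  have "\<forall>x\<in>S. dirderiv u x w = 0 + l w" using d frechet_derivative_at by force
  then show "\<exists>u'. (\<exists>l c. bounded_linear l \<and> u' = (\<lambda>x. l x + c)) \<and> (\<forall>x\<in>S. dirderiv u x w = u' x)"
    using bounded_linear_zero by blast
qed (use assms in blast)+

lemma smooth_on_const: "open S \<Longrightarrow> smooth_on S (\<lambda>x. c :: real)"
  using smooth_on_affine[of S "\<lambda>x. 0" c] by simp

lemma smooth_on_bounded_linear:
  fixes l :: "'a::real_normed_vector \<Rightarrow> real"
  shows "open S \<Longrightarrow> bounded_linear l \<Longrightarrow> smooth_on S l"
  using smooth_on_affine[of S l 0] by simp

lemma frechet_derivative_add_at:
  fixes u v :: "'a::real_normed_vector \<Rightarrow> real"
  assumes "u differentiable at x" "v differentiable at x"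
  shows "dirderiv (\<lambda>x. u x + v x) x w = dirderiv u x w + dirderiv v x w"
proof -
  have "((\<lambda>x. u x + v x) has_derivative (\<lambda>h. dirderiv u x h + dirderiv v x h)) (at x)"
    using assms by (intro has_derivative_add) (auto simp: frechet_derivative_works)
  then show ?thesis by (metis frechet_derivative_at)
qed

lemma frechet_derivative_mult_at:
  fixes u v :: "'a::real_normed_vector \<Rightarrow> real"
  assumes "u differentiable at x" "v differentiable at x"
  shows "dirderiv (\<lambda>x. u x * v x) x w = u x * dirderiv v x w + dirderiv u x w * v x"
proof -
  have "((\<lambda>x. u x * v x) has_derivative (\<lambda>h. u x * dirderiv v x h + dirderiv u x h * v x)) (at x)"
    using assms by (intro has_derivative_mult) (auto simp: frechet_derivative_works)
  then show ?thesis by (metis frechet_derivative_at)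
qed

lemma has_derivative_from_components:
  fixes \<phi> :: "'a::real_normed_vector \<Rightarrow> 'b::euclidean_space"
  assumes "\<And>b. b \<in> Basis \<Longrightarrow> (\<lambda>y. \<phi> y \<bullet> b) differentiable (at x)"
  shows "(\<phi> has_derivative (\<lambda>h. \<Sum>b\<in>Basis. dirderiv (\<lambda>y. \<phi> y \<bullet> b) x h *\<^sub>R b)) (at x)"
proof (subst has_derivative_componentwise_within, intro ballI)
  fix i :: 'b assume i: "i \<in> Basis"
  have "(\<lambda>h. (\<Sum>b\<in>Basis. dirderiv (\<lambda>y. \<phi> y \<bullet> b) x h *\<^sub>R b) \<bullet> i)
      = frechet_derivative (\<lambda>y. \<phi> y \<bullet> i) (at x)"
    using i by (simp add: inner_sum_left inner_Basis if_distrib cong: if_cong)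
  then show "((\<lambda>x. \<phi> x \<bullet> i) has_derivative
      (\<lambda>h. (\<Sum>b\<in>Basis. dirderiv (\<lambda>y. \<phi> y \<bullet> b) x h *\<^sub>R b) \<bullet> i)) (at x)"
    using assms[OF i] frechet_derivative_works by metis
qed

lemma continuous_on_if_smooth_components:
  fixes \<phi> :: "'a::real_normed_vector \<Rightarrow> 'b::euclidean_space"
  assumes "open S" "\<And>b. b \<in> Basis \<Longrightarrow> smooth_on S (\<lambda>x. \<phi> x \<bullet> b)"
  shows "continuous_on S \<phi>"
proof (rule continuous_at_imp_continuous_on, intro ballI)
  fix x assume "x \<in> S"
  have "(\<phi> has_derivative (\<lambda>h. \<Sum>b\<in>Basis. dirderiv (\<lambda>y. \<phi> y \<bullet> b) x h *\<^sub>R b)) (at x)"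
    by (rule has_derivative_from_components)
      (use assms smooth_on_differentiable_at \<open>x \<in> S\<close> in blast)
  then show "isCont \<phi> x" by (rule has_derivative_continuous)
qed

text \<open>By the chain rule \<open>comp_algebra\<close> is closed under directional derivatives, so all its
  members are smooth.\<close>

inductive_set comp_algebra ::
  "'a::real_normed_vector set \<Rightarrow> 'b::euclidean_space set \<Rightarrow> ('a \<Rightarrow> 'b) \<Rightarrow> ('a \<Rightarrow> real) set"
  for S U \<phi> where
  base: "smooth_on S u \<Longrightarrow> u \<in> comp_algebra S U \<phi>"
| comp: "smooth_on U g \<Longrightarrow> (\<lambda>x. g (\<phi> x)) \<in> comp_algebra S U \<phi>"
| add: "u \<in> comp_algebra S U \<phi> \<Longrightarrow> v \<in> comp_algebra S U \<phi> \<Longrightarrow> (\<lambda>x. u x + v x) \<in> comp_algebra S U \<phi>"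
| mult: "u \<in> comp_algebra S U \<phi> \<Longrightarrow> v \<in> comp_algebra S U \<phi> \<Longrightarrow> (\<lambda>x. u x * v x) \<in> comp_algebra S U \<phi>"

lemma comp_algebra_sum:
  assumes "open S" "\<And>i. i \<in> I \<Longrightarrow> f i \<in> comp_algebra S U \<phi>"
  shows "(\<lambda>x. \<Sum>i\<in>I. f i x) \<in> comp_algebra S U \<phi>"
  using assms(2)
proof (induction I rule: infinite_finite_induct)
  case (insert i I)
  then show ?case using comp_algebra.add[of "f i" S U \<phi> "\<lambda>x. \<Sum>i\<in>I. f i x"] by simp
qed (use comp_algebra.base[OF smooth_on_const[OF assms(1), of 0]] in simp_all)

locale smooth_map =
  fixes S :: "'a::real_normed_vector set" and U :: "'b::euclidean_space set" and \<phi> :: "'a \<Rightarrow> 'b"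
  assumes open_S: "open S" and open_U: "open U" and image_subset: "\<phi> ` S \<subseteq> U"
    and smooth_components: "\<And>b. b \<in> Basis \<Longrightarrow> smooth_on S (\<lambda>x. \<phi> x \<bullet> b)"
begin

lemma has_derivative_comp:
  assumes g: "smooth_on U g" and x: "x \<in> S"
  shows "((\<lambda>x. g (\<phi> x)) has_derivative
     (\<lambda>h. \<Sum>b\<in>Basis. dirderiv (\<lambda>y. \<phi> y \<bullet> b) x h * dirderiv g (\<phi> x) b)) (at x)"
proof -
  have g': "(g has_derivative frechet_derivative g (at (\<phi> x))) (at (\<phi> x))"
    using smooth_on_differentiable_at[OF g] image_subset x frechet_derivative_works by blast
  have \<phi>': "(\<phi> has_derivative (\<lambda>h. \<Sum>b\<in>Basis. dirderiv (\<lambda>y. \<phi> y \<bullet> b) x h *\<^sub>R b)) (at x)"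
    by (rule has_derivative_from_components)
      (use smooth_components smooth_on_differentiable_at x in blast)
  have lin: "linear (frechet_derivative g (at (\<phi> x)))"
    using g' has_derivative_linear by blast
  show ?thesis
    using has_derivative_compose[OF \<phi>' g']
    by (simp add: o_def linear_sum[OF lin] linear_scale[OF lin])
qed

lemma comp_algebra_differentiable_on: "u \<in> comp_algebra S U \<phi> \<Longrightarrow> u differentiable_on S"
proof (induction rule: comp_algebra.induct)
  case (comp g)
  then show ?case
    unfolding differentiable_on_eq_differentiable_at[OF open_S] differentiable_def
    using has_derivative_comp by blast
qed (auto intro: smooth_on_differentiable_on)

lemma comp_algebra_dirderiv:
  assumes "u \<in> comp_algebra S U \<phi>"
  shows "\<exists>u'\<in>comp_algebra S U \<phi>. \<forall>x\<in>S. dirderiv u x w = u' x"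
  using assms
proof (induction rule: comp_algebra.induct)
  case (base u)
  have "(\<lambda>x. dirderiv u x w) \<in> comp_algebra S U \<phi>"
    by (rule comp_algebra.base[OF smooth_on_dirderiv[OF base]])
  then show ?case by (rule bexI[rotated]) simp
next
  case (comp g)
  let ?u' = "\<lambda>x. \<Sum>b\<in>Basis. dirderiv (\<lambda>y. \<phi> y \<bullet> b) x w * dirderiv g (\<phi> x) b"
  have "?u' \<in> comp_algebra S U \<phi>"
    by (intro comp_algebra_sum[OF open_S] comp_algebra.mult comp_algebra.base smooth_on_dirderiv
        smooth_components comp_algebra.comp[where g="\<lambda>y. dirderiv g y _"] comp)
  moreover have "\<forall>x\<in>S. dirderiv (\<lambda>x. g (\<phi> x)) x w = ?u' x"
    by (simp add: frechet_derivative_at[OF has_derivative_comp[OF comp], symmetric])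
  ultimately show ?case by (intro bexI[of _ ?u']) simp_all
next
  case (add u v)
  then obtain u' v' where "u' \<in> comp_algebra S U \<phi>" "v' \<in> comp_algebra S U \<phi>"
    "\<forall>x\<in>S. dirderiv u x w = u' x" "\<forall>x\<in>S. dirderiv v x w = v' x" by blast
  moreover have "\<forall>x\<in>S. u differentiable at x \<and> v differentiable at x"
    using add comp_algebra_differentiable_on open_S differentiable_on_eq_differentiable_at by blast
  ultimately show ?case
    by (intro bexI[of _ "\<lambda>x. u' x + v' x"] comp_algebra.add) (auto simp: frechet_derivative_add_at)
next
  case (mult u v)
  then obtain u' v' where "u' \<in> comp_algebra S U \<phi>" "v' \<in> comp_algebra S U \<phi>"
    "\<forall>x\<in>S. dirderiv u x w = u' x" "\<forall>x\<in>S. dirderiv v x w = v' x" by blast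
  moreover have "\<forall>x\<in>S. u differentiable at x \<and> v differentiable at x"
    using mult comp_algebra_differentiable_on open_S differentiable_on_eq_differentiable_at by blast
  ultimately show ?case
    using mult.hyps
    by (intro bexI[of _ "\<lambda>x. u x * v' x + u' x * v x"] comp_algebra.add comp_algebra.mult)
      (auto simp: frechet_derivative_mult_at)
qed

lemma comp_algebra_smooth_on: "u \<in> comp_algebra S U \<phi> \<Longrightarrow> smooth_on S u"
  by (rule smooth_on_coinduct[where P="\<lambda>u. u \<in> comp_algebra S U \<phi>", OF open_S])
    (use comp_algebra_differentiable_on comp_algebra_dirderiv in blast)+

end

lemma smooth_on_compose:
  fixes \<phi> :: "'a::real_normed_vector \<Rightarrow> 'b::euclidean_space" and g :: "'b \<Rightarrow> real"
  assumes "open S" "\<And>b. b \<in> Basis \<Longrightarrow> smooth_on S (\<lambda>x. \<phi> x \<bullet> b)" "\<phi> ` S \<subseteq> U" "smooth_on U g"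
  shows "smooth_on S (\<lambda>x. g (\<phi> x))"
proof -
  interpret smooth_map S U \<phi>
    using assms smooth_on_open by unfold_locales auto
  show ?thesis using comp_algebra_smooth_on comp_algebra.comp assms(4) by blast
qed

lemma smooth_on_compose_real:
  fixes \<phi> :: "'a::real_normed_vector \<Rightarrow> real" and g :: "real \<Rightarrow> real"
  assumes "smooth_on S \<phi>" "\<And>x. x \<in> S \<Longrightarrow> \<phi> x \<in> U" "smooth_on U g"
  shows "smooth_on S (\<lambda>x. g (\<phi> x))"
proof (rule smooth_on_compose[OF smooth_on_open[OF assms(1)] _ _ assms(3)])
  show "\<phi> ` S \<subseteq> U" using assms(2) by blast
qed (use assms(1) in simp)

text \<open>For a constant map \<open>\<phi>\<close>, \<open>comp_algebra\<close> is the algebra generated by the smooth functions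
  on \<open>S\<close>.\<close>

lemma smooth_on_in_comp_algebra_const:
  assumes "smooth_on S u"
  shows "u \<in> comp_algebra S UNIV (\<lambda>x. 0::real)" "smooth_map S UNIV (\<lambda>x. 0::real)"
  using assms smooth_on_open smooth_on_const
  by (auto intro: comp_algebra.base simp: smooth_map_def)

lemma smooth_on_add:
  fixes u v :: "'a::real_normed_vector \<Rightarrow> real"
  assumes "smooth_on S u" "smooth_on S v"
  shows "smooth_on S (\<lambda>x. u x + v x)"
  using smooth_map.comp_algebra_smooth_on[OF smooth_on_in_comp_algebra_const(2)[OF assms(1)]
      comp_algebra.add[OF smooth_on_in_comp_algebra_const(1)[OF assms(1)]
        smooth_on_in_comp_algebra_const(1)[OF assms(2)]]] .

lemma smooth_on_mult:
  fixes u v :: "'a::real_normed_vector \<Rightarrow> real"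
  assumes "smooth_on S u" "smooth_on S v"
  shows "smooth_on S (\<lambda>x. u x * v x)"
  using smooth_map.comp_algebra_smooth_on[OF smooth_on_in_comp_algebra_const(2)[OF assms(1)]
      comp_algebra.mult[OF smooth_on_in_comp_algebra_const(1)[OF assms(1)]
        smooth_on_in_comp_algebra_const(1)[OF assms(2)]]] .

lemma smooth_on_cmult:
  fixes u :: "'a::real_normed_vector \<Rightarrow> real"
  shows "smooth_on S u \<Longrightarrow> smooth_on S (\<lambda>x. c * u x)"
  using smooth_on_mult smooth_on_const smooth_on_open by blast

lemma smooth_on_diff:
  fixes u v :: "'a::real_normed_vector \<Rightarrow> real"
  assumes "smooth_on S u" "smooth_on S v"
  shows "smooth_on S (\<lambda>x. u x - v x)"
  using smooth_on_add[OF assms(1) smooth_on_cmult[OF assms(2), of "-1"]] by simp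

lemma smooth_on_sum:
  fixes f :: "'i \<Rightarrow> 'a::real_normed_vector \<Rightarrow> real"
  assumes "open S" "\<And>i. i \<in> I \<Longrightarrow> smooth_on S (f i)"
  shows "smooth_on S (\<lambda>x. \<Sum>i\<in>I. f i x)"
  using assms(2)
proof (induction I rule: infinite_finite_induct)
  case (insert i I)
  then show ?case using smooth_on_add[of S "f i" "\<lambda>x. \<Sum>i\<in>I. f i x"] by simp
qed (use smooth_on_const[OF assms(1)] in simp_all)

lemma smooth_on_power:
  fixes u :: "'a::real_normed_vector \<Rightarrow> real"
  assumes "smooth_on S u"
  shows "smooth_on S (\<lambda>x. u x ^ k)"
  by (induction k) (use assms smooth_on_const smooth_on_open smooth_on_mult in auto)

lemma smooth_on_quadratic_form:
  fixes B :: "'a::real_normed_vector \<Rightarrow> 'a \<Rightarrow> real"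
  assumes B: "bounded_bilinear B" and S: "open S"
  shows "smooth_on S (\<lambda>x. B x x)"
proof (rule smooth_on_by_dirderiv[OF S])
  have d: "((\<lambda>x. B x x) has_derivative (\<lambda>h. B x h + B h x)) (at x)" for x
    using bounded_bilinear.FDERIV[OF B, of "\<lambda>x. x" "\<lambda>h. h" x UNIV "\<lambda>x. x" "\<lambda>h. h"]
    by (simp add: has_derivative_ident)
  then show "(\<lambda>x. B x x) differentiable_on S"
    by (meson differentiable_at_imp_differentiable_on differentiable_def)
  fix w
  have "bounded_linear (\<lambda>x. B x w + B w x)"
    by (intro bounded_linear_add bounded_bilinear.bounded_linear_left[OF B]
        bounded_bilinear.bounded_linear_right[OF B])
  then have "smooth_on S (\<lambda>x. B x w + B w x)" using smooth_on_bounded_linear[OF S] by blast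
  moreover have "\<forall>x\<in>S. dirderiv (\<lambda>x. B x x) x w = B x w + B w x"
    using frechet_derivative_at[OF d] by metis
  ultimately show "\<exists>u'. smooth_on S u' \<and> (\<forall>x\<in>S. dirderiv (\<lambda>x. B x x) x w = u' x)"
    by blast
qed

lemma smooth_on_powr: "smooth_on {0<..} (\<lambda>x::real. x powr a)"
proof (rule smooth_on_coinduct[where P="\<lambda>u. \<exists>c a. u = (\<lambda>x::real. c * x powr a)"])
  fix u :: "real \<Rightarrow> real" and w :: real
  assume "\<exists>c a. u = (\<lambda>x. c * x powr a)"
  then obtain c a where u: "u = (\<lambda>x. c * x powr a)" by blast
  have d: "(u has_derivative (*) (c * (a * x powr (a - 1)))) (at x)" if "x > 0" for x
    using that unfolding u has_field_derivative_def[symmetric]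
    by (auto intro!: derivative_eq_intros)
  then show "u differentiable_on {0<..}"
    by (meson differentiable_at_imp_differentiable_on differentiable_def greaterThan_iff)
  have "dirderiv u x w = (w * c * a) * x powr (a - 1)" if "x \<in> {0<..}" for x
    using that by (simp add: frechet_derivative_at[OF d, symmetric])
  then show "\<exists>u'. (\<exists>c a. u' = (\<lambda>x. c * x powr a)) \<and> (\<forall>x\<in>{0<..}. dirderiv u x w = u' x)"
    by blast
qed (simp, rule exI[of _ 1], rule exI[of _ a], simp)

lemma smooth_on_inverse: "smooth_on {0<..} (\<lambda>x::real. inverse x)"
  by (rule smooth_on_cong[OF smooth_on_powr[of "-1"]]) (simp add: powr_minus)

lemma smooth_on_sqrt: "smooth_on {0<..} (\<lambda>x::real. sqrt x)"
  by (rule smooth_on_cong[OF smooth_on_powr[of "1/2"]]) (simp add: powr_half_sqrt)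

lemma smooth_on_compose_pos:
  fixes u :: "'a::real_normed_vector \<Rightarrow> real" and g :: "real \<Rightarrow> real"
  assumes "smooth_on S u" "\<And>x. x \<in> S \<Longrightarrow> 0 < u x" "smooth_on {0<..} g"
  shows "smooth_on S (\<lambda>x. g (u x))"
  using smooth_on_compose_real[OF assms(1) _ assms(3)] assms(2) by simp

lemma smooth_on_divide:
  fixes u g :: "'a::real_normed_vector \<Rightarrow> real"
  assumes u: "smooth_on S u" and g: "smooth_on S g" and nz: "\<And>x. x \<in> S \<Longrightarrow> g x \<noteq> 0"
  shows "smooth_on S (\<lambda>x. u x / g x)"
proof -
  have "smooth_on S (\<lambda>x. inverse ((g x)\<^sup>2))"
    by (rule smooth_on_compose_pos[OF smooth_on_power[OF g] _ smooth_on_inverse]) (use nz in simp)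
  then have "smooth_on S (\<lambda>x. u x * g x * inverse ((g x)\<^sup>2))"
    by (intro smooth_on_mult u g)
  then show ?thesis
    by (rule smooth_on_cong) (use nz in \<open>simp add: power2_eq_square field_simps\<close>)
qed

lemma smooth_on_compose_snd:
  fixes g :: "'b::euclidean_space \<Rightarrow> real"
  assumes "open T" "smooth_on S g"
  shows "smooth_on (T \<times> S) (\<lambda>p::'a::euclidean_space \<times> 'b. g (snd p))"
proof (rule smooth_on_compose[OF _ _ _ assms(2)])
  show "open (T \<times> S)" using assms smooth_on_open open_Times by blast
  then show "smooth_on (T \<times> S) (\<lambda>p. snd p \<bullet> b)" for b
    by (rule smooth_on_bounded_linear)
      (intro bounded_linear_compose[OF bounded_linear_inner_left bounded_linear_snd])
qed auto

lemma dirderiv_euclidean_expansion: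
  fixes u :: "'a::euclidean_space \<Rightarrow> real"
  assumes "u differentiable at y"
  shows "dirderiv u y w = (\<Sum>b\<in>Basis. (w \<bullet> b) * dirderiv u y b)"
proof -
  have lin: "linear (frechet_derivative u (at y))" using assms by (rule linear_frechet_derivative)
  have "dirderiv u y w = dirderiv u y (\<Sum>b\<in>Basis. (w \<bullet> b) *\<^sub>R b)"
    by (simp add: euclidean_representation)
  then show ?thesis by (simp add: linear_sum[OF lin] linear_scale[OF lin])
qed

text \<open>The functions \<open>p(1/x) exp(-1/x)\<close> (extended by \<open>0\<close> for \<open>x \<le> 0\<close>) are closed under
  differentiation, which makes the smoothness of \<open>exp(-1/x)\<close> a coinduction.\<close>

definition exp_cutoff_poly :: "real poly \<Rightarrow> real \<Rightarrow> real" where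
  "exp_cutoff_poly p x = (if 0 < x then poly p (inverse x) * exp (- inverse x) else 0)"

definition cutoff_deriv_poly :: "real poly \<Rightarrow> real poly" where
  "cutoff_deriv_poly p = [:0, 0, 1:] * (p - pderiv p)"

lemma has_real_derivative_exp_cutoff_poly_pos:
  assumes x: "0 < x"
  shows "(exp_cutoff_poly p has_real_derivative exp_cutoff_poly (cutoff_deriv_poly p) x) (at x)"
proof -
  have "((\<lambda>x. poly p (inverse x) * exp (- inverse x)) has_real_derivative
     poly (pderiv p) (inverse x) * (- (inverse x * inverse x)) * exp (- inverse x)
     + poly p (inverse x) * (exp (- inverse x) * (inverse x * inverse x))) (at x)"
    using x
    by (auto intro!: derivative_eq_intros DERIV_chain2[OF poly_DERIV] simp: power2_eq_square)
  moreover have "poly (pderiv p) (inverse x) * (- (inverse x * inverse x)) * exp (- inverse x)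
     + poly p (inverse x) * (exp (- inverse x) * (inverse x * inverse x))
     = exp_cutoff_poly (cutoff_deriv_poly p) x"
    using x by (simp add: exp_cutoff_poly_def cutoff_deriv_poly_def algebra_simps)
  ultimately have "((\<lambda>x. poly p (inverse x) * exp (- inverse x)) has_real_derivative
      exp_cutoff_poly (cutoff_deriv_poly p) x) (at x)"
    by simp
  then show ?thesis
    by (rule has_field_derivative_transform_within_open[where S="{0<..}"])
      (use x in \<open>auto simp: exp_cutoff_poly_def\<close>)
qed

lemma has_real_derivative_exp_cutoff_poly_neg:
  assumes x: "x < 0"
  shows "(exp_cutoff_poly p has_real_derivative exp_cutoff_poly (cutoff_deriv_poly p) x) (at x)"
proof -
  have "((\<lambda>x. 0) has_real_derivative 0) (at x)" by simp
  then have "(exp_cutoff_poly p has_real_derivative 0) (at x)"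
    by (rule has_field_derivative_transform_within_open[where S="{..<0}"])
      (use x in \<open>auto simp: exp_cutoff_poly_def\<close>)
  then show ?thesis using x by (simp add: exp_cutoff_poly_def)
qed

lemma tendsto_poly_times_exp_neg: "((\<lambda>t::real. t * poly p t * exp (- t)) \<longlongrightarrow> 0) at_top"
proof -
  have eq: "t * poly p t * exp (- t) = (\<Sum>i\<le>degree p. coeff p i * (t ^ Suc i / exp t))" for t
    by (simp add: poly_altdef sum_distrib_left sum_distrib_right exp_minus field_simps)
  have "((\<lambda>t::real. \<Sum>i\<le>degree p. coeff p i * (t ^ Suc i / exp t))
      \<longlongrightarrow> (\<Sum>i\<le>degree p. coeff p i * 0)) at_top"
    by (intro tendsto_sum tendsto_mult tendsto_const tendsto_power_div_exp_0)
  then show ?thesis by (simp add: eq)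
qed

lemma has_real_derivative_exp_cutoff_poly_0:
  "(exp_cutoff_poly p has_real_derivative exp_cutoff_poly (cutoff_deriv_poly p) 0) (at 0)"
proof -
  have r: "((\<lambda>h. (exp_cutoff_poly p (0 + h) - exp_cutoff_poly p 0) / h) \<longlongrightarrow> 0) (at_right 0)"
  proof -
    have "((\<lambda>h. (\<lambda>t. t * poly p t * exp (- t)) (inverse h)) \<longlongrightarrow> 0) (at_right (0::real))"
      by (rule filterlim_compose[OF tendsto_poly_times_exp_neg filterlim_inverse_at_top_right])
    moreover have "eventually (\<lambda>h. (\<lambda>t. t * poly p t * exp (- t)) (inverse h)
        = (exp_cutoff_poly p (0 + h) - exp_cutoff_poly p 0) / h) (at_right (0::real))"
      using eventually_at_right_less[of 0]
      by eventually_elim (auto simp: exp_cutoff_poly_def field_simps)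
    ultimately show ?thesis by (rule Lim_transform_eventually)
  qed
  have l: "((\<lambda>h. (exp_cutoff_poly p (0 + h) - exp_cutoff_poly p 0) / h) \<longlongrightarrow> 0) (at_left 0)"
  proof -
    have "eventually (\<lambda>h. 0 = (exp_cutoff_poly p (0 + h) - exp_cutoff_poly p 0) / h)
        (at_left (0::real))"
      using eventually_at_left_real[of "-1" "0::real",
          OF neg_less_0_iff_less[THEN iffD2, OF zero_less_one]]
      by eventually_elim (auto simp: exp_cutoff_poly_def)
    then show ?thesis by (rule Lim_transform_eventually[OF tendsto_const])
  qed
  have "(exp_cutoff_poly p has_real_derivative 0) (at 0)"
    unfolding DERIV_def using filterlim_split_at[OF l r] by simp
  then show ?thesis by (simp add: exp_cutoff_poly_def)
qed

lemma has_real_derivative_exp_cutoff_poly: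
  "(exp_cutoff_poly p has_real_derivative exp_cutoff_poly (cutoff_deriv_poly p) x) (at x)"
  using has_real_derivative_exp_cutoff_poly_pos has_real_derivative_exp_cutoff_poly_neg
    has_real_derivative_exp_cutoff_poly_0
  by (cases "x < 0"; cases "x = 0") auto

lemma exp_cutoff_poly_smult: "exp_cutoff_poly (smult c p) x = c * exp_cutoff_poly p x"
  by (simp add: exp_cutoff_poly_def)

lemma smooth_on_exp_cutoff_poly: "smooth_on UNIV (exp_cutoff_poly p)"
proof (rule smooth_on_coinduct[where P="\<lambda>u. \<exists>p. u = exp_cutoff_poly p"])
  fix u :: "real \<Rightarrow> real" assume "\<exists>p. u = exp_cutoff_poly p"
  then obtain p where u: "u = exp_cutoff_poly p" by blast
  have d: "(u has_derivative (*) (exp_cutoff_poly (cutoff_deriv_poly p) x)) (at x)" for x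
    using has_real_derivative_exp_cutoff_poly[of p x] by (simp add: u has_field_derivative_def)
  then show "u differentiable_on UNIV"
    by (meson differentiable_at_imp_differentiable_on differentiable_def)
  fix w :: real
  show "\<exists>u'. (\<exists>p. u' = exp_cutoff_poly p) \<and> (\<forall>x\<in>UNIV. dirderiv u x w = u' x)"
  proof (rule exI[of _ "exp_cutoff_poly (smult w (cutoff_deriv_poly p))"], intro conjI ballI)
    fix x :: real
    show "dirderiv u x w = exp_cutoff_poly (smult w (cutoff_deriv_poly p)) x"
      by (simp add: frechet_derivative_at[OF d, symmetric] exp_cutoff_poly_smult)
  qed auto
qed auto

definition exp_cutoff :: "real \<Rightarrow> real" where
  "exp_cutoff x = (if 0 < x then exp (- inverse x) else 0)"

lemma exp_cutoff_eq_exp_cutoff_poly: "exp_cutoff = exp_cutoff_poly 1"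
  by (auto simp: exp_cutoff_def exp_cutoff_poly_def fun_eq_iff)

lemma smooth_on_exp_cutoff: "smooth_on UNIV exp_cutoff"
  unfolding exp_cutoff_eq_exp_cutoff_poly by (rule smooth_on_exp_cutoff_poly)

lemma exp_cutoff_pos: "0 < x \<Longrightarrow> 0 < exp_cutoff x" and exp_cutoff_zero: "x \<le> 0 \<Longrightarrow> exp_cutoff x = 0"
  by (auto simp: exp_cutoff_def)

definition partial_blinfun :: "(real \<times> 'a::euclidean_space \<Rightarrow> real) \<Rightarrow> 'a \<Rightarrow> real \<Rightarrow> 'a \<Rightarrow>\<^sub>L real"
  where "partial_blinfun G x t = Blinfun (\<lambda>w. dirderiv G (t, x) (0, w))"

context
  fixes G :: "real \<times> 'a::euclidean_space \<Rightarrow> real" and S :: "'a set"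
  assumes G: "smooth_on (UNIV \<times> S) G"
begin

lemma has_derivative_partial:
  assumes "x \<in> S"
  shows "((\<lambda>x. G (t, x)) has_derivative (\<lambda>w. dirderiv G (t, x) (0, w))) (at x)"
proof -
  have "((\<lambda>x. (t, x)) has_derivative (\<lambda>w. (0, w))) (at x)"
    by (auto intro!: derivative_eq_intros)
  moreover have "(G has_derivative dirderiv G (t, x)) (at (t, x))"
    using smooth_on_differentiable_at[OF G] assms frechet_derivative_works by blast
  ultimately show ?thesis by (metis (no_types) has_derivative_compose o_def)
qed

lemma blinfun_apply_partial_blinfun:
  "x \<in> S \<Longrightarrow> blinfun_apply (partial_blinfun G x t) = (\<lambda>w. dirderiv G (t, x) (0, w))"
  unfolding partial_blinfun_def
  using has_derivative_bounded_linear[OF has_derivative_partial]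
  by (rule bounded_linear_Blinfun_apply)

lemma continuous_on_partial_blinfun:
  assumes "T \<subseteq> S"
  shows "continuous_on (T \<times> C) (\<lambda>(x, t). partial_blinfun G x t)"
proof (rule continuous_on_blinfun_componentwise)
  fix i :: 'a
  have "continuous_on (T \<times> C) (\<lambda>p. dirderiv G (snd p, fst p) (0, i))"
    by (rule continuous_on_compose2[OF smooth_on_continuous_on[OF smooth_on_dirderiv[OF G]]])
      (use assms in \<open>auto intro!: continuous_intros\<close>)
  then show "continuous_on (T \<times> C) (\<lambda>p. blinfun_apply (case p of (x, t) \<Rightarrow> partial_blinfun G x t) i)"
    by (rule continuous_on_eq) (use assms blinfun_apply_partial_blinfun in auto)
qed

lemma has_derivative_integral_param:
  assumes S: "open S" and z: "z \<in> S"
  shows "((\<lambda>z. integral {0..1} (\<lambda>t. G (t, z))) has_derivative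
          (\<lambda>w. integral {0..1} (\<lambda>t. dirderiv G (t, z) (0, w)))) (at z)"
proof -
  obtain r where r: "r > 0" "ball z r \<subseteq> S" using S z open_contains_ball by blast
  have "((\<lambda>x. integral (cbox 0 1) (\<lambda>t. G (t, x))) has_derivative
      integral (cbox 0 1) (partial_blinfun G z)) (at z within ball z r)"
  proof (rule leibniz_rule[where f="\<lambda>x t. G (t, x)" and fx="\<lambda>x t. partial_blinfun G x t"])
    fix x t assume "x \<in> ball z r"
    then show "((\<lambda>x. G (t, x)) has_derivative blinfun_apply (partial_blinfun G x t))
        (at x within ball z r)"
      using r has_derivative_partial blinfun_apply_partial_blinfun
      by (simp add: has_derivative_at_withinI subset_iff)
  next
    fix x assume "x \<in> ball z r"
    then have "continuous_on (cbox 0 1) (\<lambda>t. G (t, x))"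
      using r by (intro continuous_on_compose2[OF smooth_on_continuous_on[OF G]])
        (auto intro!: continuous_intros)
    then show "(\<lambda>t. G (t, x)) integrable_on cbox 0 1" by (rule integrable_continuous)
  qed (use continuous_on_partial_blinfun r in auto)
  then have deriv: "((\<lambda>x. integral (cbox 0 1) (\<lambda>t. G (t, x))) has_derivative
      integral (cbox 0 1) (partial_blinfun G z)) (at z)"
    using at_within_open[of z "ball z r"] r by simp
  have "continuous_on (cbox 0 1) (partial_blinfun G z)"
    by (rule continuous_on_compose2[OF continuous_on_partial_blinfun[of "ball z r"],
          of _ "\<lambda>t. (z, t)", simplified])
      (use r in \<open>auto intro!: continuous_intros\<close>)
  then have "blinfun_apply (integral (cbox 0 1) (partial_blinfun G z)) w
      = integral {0..1} (\<lambda>t. dirderiv G (t, z) (0, w))" for w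
    using blinfun_apply_integral[OF integrable_continuous, of _ _ "partial_blinfun G z" w]
      blinfun_apply_partial_blinfun[OF z]
    by (simp add: cbox_interval)
  then have "blinfun_apply (integral (cbox 0 1) (partial_blinfun G z))
      = (\<lambda>w. integral {0..1} (\<lambda>t. dirderiv G (t, z) (0, w)))"
    by (rule ext)
  then show ?thesis using deriv by (simp add: cbox_interval)
qed

end

lemma smooth_on_integral_param:
  fixes G :: "real \<times> 'a::euclidean_space \<Rightarrow> real"
  assumes S: "open S" and G: "smooth_on (UNIV \<times> S) G"
  shows "smooth_on S (\<lambda>z. integral {0..1} (\<lambda>t::real. G (t, z)))"
proof (rule smooth_on_coinduct[where
      P="\<lambda>v. \<exists>G. smooth_on (UNIV \<times> S) G \<and> v = (\<lambda>z. integral {0..1} (\<lambda>t::real. G (t, z)))", OF S])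
  fix v :: "'a \<Rightarrow> real"
  assume "\<exists>G. smooth_on (UNIV \<times> S) G \<and> v = (\<lambda>z. integral {0..1} (\<lambda>t::real. G (t, z)))"
  then obtain H where "smooth_on (UNIV \<times> S) H" "v = (\<lambda>z. integral {0..1} (\<lambda>t::real. H (t, z)))"
    by blast
  then show "v differentiable_on S"
    unfolding differentiable_on_eq_differentiable_at[OF S] differentiable_def
    using has_derivative_integral_param[OF _ S] by blast
next
  fix v :: "'a \<Rightarrow> real" and w
  assume "\<exists>G. smooth_on (UNIV \<times> S) G \<and> v = (\<lambda>z. integral {0..1} (\<lambda>t::real. G (t, z)))"
  then obtain H where H: "smooth_on (UNIV \<times> S) H"
    and v: "v = (\<lambda>z. integral {0..1} (\<lambda>t::real. H (t, z)))"
    by blast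
  let ?H' = "\<lambda>p. dirderiv H p (0, w)"
  have "smooth_on (UNIV \<times> S) ?H'" by (rule smooth_on_dirderiv[OF H])
  moreover have "\<forall>x\<in>S. dirderiv v x w = integral {0..1} (\<lambda>t. ?H' (t, x))"
    unfolding v
    by (simp add: frechet_derivative_at[OF has_derivative_integral_param[OF H S], symmetric])
  ultimately show "\<exists>u'. (\<exists>G. smooth_on (UNIV \<times> S) G
      \<and> u' = (\<lambda>z. integral {0..1} (\<lambda>t::real. G (t, z))))
      \<and> (\<forall>x\<in>S. dirderiv v x w = u' x)"
    by blast
qed (use G in blast)

section \<open>The null cone\<close>

definition r0sq :: "'n::finite pt \<Rightarrow> real" where
  "r0sq z = (cmod (fst z))^2"

definition r1sq :: "'n::finite pt \<Rightarrow> real" where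
  "r1sq z = (\<Sum>j\<in>UNIV. (cmod (snd z $ j))^2)"

definition rho0 :: "'n::finite pt \<Rightarrow> real" where
  "rho0 z = sqrt (r0sq z)"

definition rho1 :: "'n::finite pt \<Rightarrow> real" where
  "rho1 z = sqrt (r1sq z)"

abbreviation both_nonzero :: "'n::finite pt set" where
  "both_nonzero \<equiv> {z. fst z \<noteq> 0 \<and> snd z \<noteq> 0}"

lemma Lform_eq: "Lform z = r0sq z - r1sq z"
  by (simp add: Lform_def r0sq_def r1sq_def)

lemma r0sq_inner: "r0sq z = fst z \<bullet> fst z"
  by (simp add: r0sq_def power2_norm_eq_inner)

lemma r1sq_inner: "r1sq z = snd z \<bullet> snd z"
  by (simp add: r1sq_def inner_vec_def power2_norm_eq_inner)

lemma r1sq_norm: "r1sq z = (norm (snd z))^2"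
  by (simp add: r1sq_inner power2_norm_eq_inner)

lemma r0sq_nonneg: "0 \<le> r0sq z" and r1sq_nonneg: "0 \<le> r1sq z"
  by (auto simp: r0sq_def r1sq_norm)

lemma r0sq_pos: "0 < r0sq z \<longleftrightarrow> fst z \<noteq> 0"
  by (auto simp: r0sq_def)

lemma r1sq_pos: "0 < r1sq z \<longleftrightarrow> snd z \<noteq> 0"
  by (auto simp: r1sq_norm)

lemma r0sq_eq_0_iff: "r0sq z = 0 \<longleftrightarrow> fst z = 0"
  by (auto simp: r0sq_def)

lemma r1sq_eq_0_iff: "r1sq z = 0 \<longleftrightarrow> snd z = 0"
  by (auto simp: r1sq_norm)

lemma rho0_eq: "rho0 z = cmod (fst z)"
  by (simp add: rho0_def r0sq_def)

lemma rho1_eq: "rho1 z = norm (snd z)"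
  by (simp add: rho1_def r1sq_norm)

lemma rho0_pos [simp]: "fst z \<noteq> 0 \<Longrightarrow> 0 < rho0 z"
  by (simp add: rho0_eq)

lemma rho1_pos [simp]: "snd z \<noteq> 0 \<Longrightarrow> 0 < rho1 z"
  by (simp add: rho1_eq)

lemma Lform_eq_rho: "Lform z = (rho0 z - rho1 z) * (rho0 z + rho1 z)"
  using r0sq_nonneg[of z] r1sq_nonneg[of z]
  by (simp add: Lform_eq rho0_def rho1_def algebra_simps)

lemma pt_eq_0_iff: "(z :: 'n::finite pt) = 0 \<longleftrightarrow> fst z = 0 \<and> snd z = 0"
  by (auto simp: prod_eq_iff)

lemma open_both_nonzero: "open (both_nonzero :: 'n::finite pt set)"
  by (intro open_Collect_conj open_Collect_neq continuous_intros)

lemma open_nonzero: "open (- {0 :: 'n::finite pt})"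
  by auto

lemma smooth_on_r0sq: "open S \<Longrightarrow> smooth_on S (r0sq :: 'n::finite pt \<Rightarrow> real)"
  unfolding r0sq_inner[abs_def]
  by (rule smooth_on_quadratic_form[where B="\<lambda>x y. fst x \<bullet> fst y"])
    (auto intro: bounded_bilinear.comp[OF bounded_bilinear_inner
      bounded_linear_fst bounded_linear_fst])

lemma smooth_on_r1sq: "open S \<Longrightarrow> smooth_on S (r1sq :: 'n::finite pt \<Rightarrow> real)"
  unfolding r1sq_inner[abs_def]
  by (rule smooth_on_quadratic_form[where B="\<lambda>x y. snd x \<bullet> snd y"])
    (auto intro: bounded_bilinear.comp[OF bounded_bilinear_inner
      bounded_linear_snd bounded_linear_snd])

lemma smooth_on_Lform: "open S \<Longrightarrow> smooth_on S (Lform :: 'n::finite pt \<Rightarrow> real)"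
  unfolding Lform_eq[abs_def] by (intro smooth_on_diff smooth_on_r0sq smooth_on_r1sq)

lemma smooth_on_rho0: "smooth_on both_nonzero (rho0 :: 'n::finite pt \<Rightarrow> real)"
  unfolding rho0_def[abs_def]
  by (rule smooth_on_compose_pos[OF smooth_on_r0sq[OF open_both_nonzero] _ smooth_on_sqrt])
    (simp add: r0sq_pos)

lemma smooth_on_rho1: "smooth_on both_nonzero (rho1 :: 'n::finite pt \<Rightarrow> real)"
  unfolding rho1_def[abs_def]
  by (rule smooth_on_compose_pos[OF smooth_on_r1sq[OF open_both_nonzero] _ smooth_on_sqrt])
    (simp add: r1sq_pos)

lemma fst_cscale: "fst (cscale c z) = c * fst z"
  and snd_cscale: "snd (cscale c z) $ j = c * (snd z $ j)"
  by (simp_all add: cscale_def)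

lemma r0sq_cscale: "r0sq (cscale c z) = (cmod c)^2 * r0sq z"
  by (simp add: r0sq_def cscale_def norm_mult power_mult_distrib)

lemma r1sq_cscale: "r1sq (cscale c z) = (cmod c)^2 * r1sq z"
  by (simp add: r1sq_def cscale_def norm_mult power_mult_distrib sum_distrib_left)

lemma Lform_cscale: "Lform (cscale c z) = (cmod c)^2 * Lform z"
  by (simp add: Lform_eq r0sq_cscale r1sq_cscale algebra_simps)

lemma cscale_eq_0_iff: "c \<noteq> 0 \<Longrightarrow> cscale c z = 0 \<longleftrightarrow> z = 0"
  by (auto simp: cscale_def prod_eq_iff vec_eq_iff zero_prod_def)

lemma cscale_of_real: "cscale (complex_of_real t) z = t *\<^sub>R z"
  by (auto simp: cscale_def prod_eq_iff vec_eq_iff complex_eq_iff)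

lemma linear_cscale: "linear (cscale c :: 'n::finite pt \<Rightarrow> 'n pt)"
  by (rule linearI) (auto simp: cscale_def prod_eq_iff vec_eq_iff scaleR_conv_of_real algebra_simps)

lemma bounded_linear_cscale: "bounded_linear (cscale c :: 'n::finite pt \<Rightarrow> 'n pt)"
  using linear_cscale linear_conv_bounded_linear by blast

lemma nullcone_r0sq_eq_r1sq: "z \<in> nullcone \<Longrightarrow> r0sq z = r1sq z \<and> 0 < r0sq z"
proof -
  assume z: "z \<in> nullcone"
  then have e: "r0sq z = r1sq z" by (simp add: nullcone_def Lform_eq)
  have "fst z \<noteq> 0"
  proof
    assume "fst z = 0"
    then have "snd z = 0" using e by (simp add: r0sq_eq_0_iff[symmetric] r1sq_eq_0_iff[symmetric])
    with \<open>fst z = 0\<close> z show False by (simp add: nullcone_def pt_eq_0_iff)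
  qed
  then show ?thesis using e r0sq_pos by blast
qed

lemma nullcone_subset_both_nonzero: "z \<in> nullcone \<Longrightarrow> z \<in> both_nonzero"
  using nullcone_r0sq_eq_r1sq[of z] r0sq_pos[of z] r1sq_pos[of z] by simp

section \<open>A first extension\<close>

text \<open>\<open>balance\<close> is invariant under \<open>\<complex>\<^sup>*\<close>, takes its maximum \<open>1/4\<close> exactly on the null cone
  and vanishes where \<open>cone_proj\<close> is undefined; cutting off at \<open>balance \<le> 1/8\<close> gives a smooth
  extension of \<open>f \<circ> cone_proj\<close>.\<close>

definition balance :: "'n::finite pt \<Rightarrow> real" where
  "balance z = r0sq z * r1sq z * (inverse (r0sq z + r1sq z))^2"

definition cone_proj :: "'n::finite pt \<Rightarrow> 'n pt" where
  "cone_proj z = (inverse (rho0 z) *\<^sub>R fst z, inverse (rho1 z) *\<^sub>R snd z)"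

definition initial_ext :: "('n::finite pt \<Rightarrow> real) \<Rightarrow> 'n pt \<Rightarrow> real" where
  "initial_ext f z = exp_cutoff (balance z - 1/8) * f (cone_proj z) * inverse (exp_cutoff (1/8))"

lemma r0sq_add_r1sq_pos: "z \<noteq> 0 \<Longrightarrow> 0 < r0sq z + r1sq z"
  using r0sq_nonneg[of z] r1sq_nonneg[of z] r0sq_pos[of z] r1sq_pos[of z] pt_eq_0_iff[of z]
  by linarith

lemma smooth_on_balance: "smooth_on (- {0}) (balance :: 'n::finite pt \<Rightarrow> real)"
proof -
  have "smooth_on (- {0}) (\<lambda>z::'n pt. inverse (r0sq z + r1sq z))"
    by (rule smooth_on_compose_pos[OF smooth_on_add[OF smooth_on_r0sq smooth_on_r1sq] _
          smooth_on_inverse])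
      (auto intro: r0sq_add_r1sq_pos)
  then show ?thesis unfolding balance_def[abs_def]
    by (intro smooth_on_mult smooth_on_power smooth_on_r0sq smooth_on_r1sq) auto
qed

lemma balance_cscale:
  assumes "c \<noteq> 0"
  shows "balance (cscale c z) = balance z"
proof -
  have k: "(cmod c)^2 \<noteq> 0" using assms by simp
  have "(cmod c)^2 * r0sq z + (cmod c)^2 * r1sq z = (cmod c)^2 * (r0sq z + r1sq z)"
    by (simp add: algebra_simps)
  then have "(inverse ((cmod c)^2 * r0sq z + (cmod c)^2 * r1sq z))^2
     = (inverse ((cmod c)^2))^2 * (inverse (r0sq z + r1sq z))^2"
    by (simp add: power_mult_distrib)
  moreover have aux: "k \<noteq> 0 \<Longrightarrow> k * a * (k * b) * ((inverse k)^2 * Y) = a * b * Y" for k a b Y :: real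
    by (simp add: power2_eq_square field_simps)
  ultimately show ?thesis
    unfolding balance_def r0sq_cscale r1sq_cscale using aux[OF k] by simp
qed

lemma balance_not_both_nonzero: "z \<notin> both_nonzero \<Longrightarrow> balance z = 0"
  by (auto simp: balance_def r0sq_eq_0_iff r1sq_eq_0_iff)

lemma balance_nullcone: "z \<in> nullcone \<Longrightarrow> balance z = 1/4"
  using nullcone_r0sq_eq_r1sq[of z] by (simp add: balance_def field_simps power2_eq_square)

lemma cone_proj_inner:
  "cone_proj z \<bullet> c = inverse (rho0 z) * (fst z \<bullet> fst c) + inverse (rho1 z) * (snd z \<bullet> snd c)"
  by (simp add: cone_proj_def inner_prod_def)

lemma smooth_on_cone_proj_inner: "smooth_on both_nonzero (\<lambda>z::'n::finite pt. cone_proj z \<bullet> c)"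
proof -
  have o: "open (both_nonzero :: 'n pt set)" by (rule open_both_nonzero)
  have "smooth_on both_nonzero (\<lambda>z::'n pt. inverse (rho0 z))"
    by (rule smooth_on_compose_pos[OF smooth_on_rho0 _ smooth_on_inverse]) simp
  moreover have "smooth_on both_nonzero (\<lambda>z::'n pt. inverse (rho1 z))"
    by (rule smooth_on_compose_pos[OF smooth_on_rho1 _ smooth_on_inverse]) simp
  moreover have "smooth_on both_nonzero (\<lambda>z::'n pt. fst z \<bullet> fst c)"
    by (rule smooth_on_bounded_linear[OF o])
      (intro bounded_linear_compose[OF bounded_linear_inner_left bounded_linear_fst])
  moreover have "smooth_on both_nonzero (\<lambda>z::'n pt. snd z \<bullet> snd c)"
    by (rule smooth_on_bounded_linear[OF o])
      (intro bounded_linear_compose[OF bounded_linear_inner_left bounded_linear_snd])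
  ultimately show ?thesis unfolding cone_proj_inner
    by (intro smooth_on_add smooth_on_mult)
qed

lemma continuous_on_cone_proj: "continuous_on (both_nonzero :: 'n::finite pt set) cone_proj"
  by (rule continuous_on_if_smooth_components[OF open_both_nonzero smooth_on_cone_proj_inner])

lemma cone_proj_in_nullcone: "z \<in> both_nonzero \<Longrightarrow> cone_proj z \<in> nullcone"
  by (auto simp: nullcone_def Lform_eq cone_proj_def r0sq_def r1sq_norm rho0_eq rho1_eq pt_eq_0_iff)

lemma fst_cone_proj: "fst (cone_proj z) = inverse (rho0 z) *\<^sub>R fst z"
  and snd_cone_proj: "snd (cone_proj z) $ j = inverse (rho1 z) *\<^sub>R (snd z $ j)"
  by (simp_all add: cone_proj_def)

lemma cone_proj_cscale:
  assumes c: "c \<noteq> 0" and z: "z \<in> both_nonzero"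
  shows "cone_proj (cscale c z) = cscale (c / complex_of_real (cmod c)) (cone_proj z)"
proof -
  have s0: "rho0 (cscale c z) = cmod c * rho0 z" and s1: "rho1 (cscale c z) = cmod c * rho1 z"
    by (simp_all add: rho0_def rho1_def r0sq_cscale r1sq_cscale real_sqrt_mult)
  have "0 < rho0 z" "0 < rho1 z" using z by auto
  then have cm: "cmod c \<noteq> 0" and p0: "rho0 z \<noteq> 0" and p1: "rho1 z \<noteq> 0" using c by auto
  have "fst (cone_proj (cscale c z)) = fst (cscale (c / complex_of_real (cmod c)) (cone_proj z))"
    unfolding fst_cone_proj fst_cscale s0 using cm p0
    by (simp add: scaleR_conv_of_real field_simps)
  moreover have "snd (cone_proj (cscale c z)) $ j
      = snd (cscale (c / complex_of_real (cmod c)) (cone_proj z)) $ j"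
    for j
    unfolding snd_cone_proj snd_cscale s1 using cm p1
    by (simp add: scaleR_conv_of_real field_simps)
  ultimately show ?thesis by (simp add: prod_eq_iff vec_eq_iff)
qed

lemma cone_proj_nullcone:
  "z \<in> nullcone \<Longrightarrow> cone_proj z = cscale (complex_of_real (inverse (rho0 z))) z"
  using nullcone_r0sq_eq_r1sq[of z]
  by (simp add: cone_proj_def rho0_def rho1_def cscale_of_real prod_eq_iff flip: of_real_inverse)

context
  fixes f :: "'n::finite pt \<Rightarrow> real"
  assumes f: "f \<in> Espace"
begin

lemma initial_ext_nullcone: "z \<in> nullcone \<Longrightarrow> initial_ext f z = f z"
proof -
  assume z: "z \<in> nullcone"
  then have "0 < rho0 z" using nullcone_subset_both_nonzero[OF z] by simp
  then have "complex_of_real (inverse (rho0 z)) \<noteq> 0" by simp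
  then have "f (cone_proj z) = f z"
    using f z by (simp add: Espace_def cone_proj_nullcone)
  moreover have "exp_cutoff (1/8) \<noteq> 0" using exp_cutoff_pos[of "1/8"] by simp
  ultimately show ?thesis by (simp add: initial_ext_def balance_nullcone[OF z])
qed

lemma initial_ext_eq_0: "balance z \<le> 1/8 \<Longrightarrow> initial_ext f z = 0"
  by (simp add: initial_ext_def exp_cutoff_zero)

lemma homog00_initial_ext: "homog00 (initial_ext f)"
  unfolding homog00_def
proof (intro allI impI)
  fix z :: "'n pt" and c :: complex
  assume z: "z \<noteq> 0" and c: "c \<noteq> 0"
  show "initial_ext f (cscale c z) = initial_ext f z"
  proof (cases "z \<in> both_nonzero")
    case True
    have "c / complex_of_real (cmod c) \<noteq> 0" using c by simp
    then have "f (cone_proj (cscale c z)) = f (cone_proj z)"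
      using f cone_proj_in_nullcone[OF True] by (simp add: Espace_def cone_proj_cscale[OF c True])
    then show ?thesis by (simp add: initial_ext_def balance_cscale[OF c])
  next
    case False
    then have "balance z = 0" by (rule balance_not_both_nonzero)
    moreover have "balance (cscale c z) = balance z" by (rule balance_cscale[OF c])
    ultimately
    show ?thesis by (simp add: initial_ext_eq_0)
  qed
qed

lemma smooth_near_both_nonzero_initial_ext:
  assumes x: "x \<in> both_nonzero"
  shows "\<exists>T. open T \<and> x \<in> T \<and> smooth_on T (initial_ext f)"
proof -
  obtain U g where U: "open U" "cone_proj x \<in> U" "smooth_on U g" "\<forall>y\<in>U \<inter> nullcone. g y = f y"
    using f cone_proj_in_nullcone[OF x] by (auto simp: Espace_def smooth_on_subset_def)
  define T where "T = both_nonzero \<inter> cone_proj -` U"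
  have T: "open T" "T \<subseteq> both_nonzero" "T \<subseteq> - {0}"
    using continuous_open_preimage[OF continuous_on_cone_proj open_both_nonzero U(1)]
    by (auto simp: T_def pt_eq_0_iff)
  have "smooth_on T (\<lambda>y. exp_cutoff (balance y - 1/8))"
    by (rule smooth_on_compose_real[OF smooth_on_diff[OF smooth_on_open_subset[OF smooth_on_balance]
          smooth_on_const] _ smooth_on_exp_cutoff]) (use T in auto)
  moreover have "smooth_on T (\<lambda>y. g (cone_proj y))"
  proof (rule smooth_on_compose[OF T(1) _ _ U(3)])
    show "smooth_on T (\<lambda>y. cone_proj y \<bullet> b)" for b
      by (rule smooth_on_open_subset[OF smooth_on_cone_proj_inner T(1,2)])
    show "cone_proj ` T \<subseteq> U" by (auto simp: T_def)
  qed
  ultimately have smooth: "smooth_on T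
      (\<lambda>y. exp_cutoff (balance y - 1/8) * g (cone_proj y) * inverse (exp_cutoff (1/8)))"
    using T(1) by (intro smooth_on_mult smooth_on_const)
  have g: "g (cone_proj y) = f (cone_proj y)" if "y \<in> T" for y
  proof -
    have "cone_proj y \<in> U \<inter> nullcone" using that cone_proj_in_nullcone[of y] by (auto simp: T_def)
    then show ?thesis using U(4) by blast
  qed
  have "smooth_on T (initial_ext f)"
    by (rule smooth_on_cong[OF smooth]) (simp add: initial_ext_def g)
  moreover have "x \<in> T" using x U(2) by (simp add: T_def)
  ultimately show ?thesis using T(1) by blast
qed

lemma smooth_on_initial_ext: "smooth_on (- {0}) (initial_ext f)"
proof (rule smooth_on_local[OF open_nonzero])
  fix x :: "'n pt" assume x: "x \<in> - {0}"
  show "\<exists>T. open T \<and> x \<in> T \<and> smooth_on T (initial_ext f)"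
  proof (cases "balance x < 1/8")
    case True
    define T :: "'n pt set" where "T = - {0} \<inter> balance -` {..<1/8}"
    have "open T"
      using continuous_open_preimage[OF smooth_on_continuous_on[OF smooth_on_balance] open_nonzero,
          of "{..<1/8}"]
      by (simp add: T_def)
    moreover have "smooth_on T (initial_ext f)"
      by (rule smooth_on_cong[OF smooth_on_const[OF \<open>open T\<close>, of 0]])
        (simp add: T_def initial_ext_eq_0)
    moreover have "x \<in> T" using x True by (simp add: T_def)
    ultimately show ?thesis by blast
  next
    case False
    have "x \<in> both_nonzero"
    proof (rule ccontr)
      assume "x \<notin> both_nonzero"
      then have "balance x = 0" by (rule balance_not_both_nonzero)
      with False show False by simp
    qed
    then show ?thesis by (rule smooth_near_both_nonzero_initial_ext)
  qed
qed

end

section \<open>The Laplacian\<close>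

lemma d2_eq: "d2 v u x = dirderiv (\<lambda>y. dirderiv u y v) x v"
  by (simp add: d2_def)

lemma frechet_derivative_cmult_at:
  fixes g :: "'a::real_normed_vector \<Rightarrow> real"
  assumes "g differentiable at x"
  shows "dirderiv (\<lambda>y. c * g y) x w = c * dirderiv g x w"
  using frechet_derivative_mult_at[of "\<lambda>y. c" x g w] assms by simp

lemma dirderiv_differentiable_at:
  fixes u :: "'a::real_normed_vector \<Rightarrow> real"
  shows "smooth_on S u \<Longrightarrow> x \<in> S \<Longrightarrow> (\<lambda>y. dirderiv u y v) differentiable at x"
  using smooth_on_differentiable_at[OF smooth_on_dirderiv] by blast

lemma d2_mult:
  fixes a b :: "'a::real_normed_vector \<Rightarrow> real"
  assumes a: "smooth_on S a" and b: "smooth_on S b" and x: "x \<in> S"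
  shows "d2 v (\<lambda>y. a y * b y) x
    = d2 v a x * b x + 2 * (dirderiv a x v * dirderiv b x v) + a x * d2 v b x"
proof -
  have S: "open S" using a smooth_on_open by blast
  have "frechet_derivative (\<lambda>y. dirderiv (\<lambda>y. a y * b y) y v) (at x)
      = frechet_derivative (\<lambda>y. a y * dirderiv b y v + dirderiv a y v * b y) (at x)"
    by (rule frechet_derivative_cong_open[OF S x])
      (intro frechet_derivative_mult_at smooth_on_differentiable_at[OF a]
        smooth_on_differentiable_at[OF b])
  moreover have "frechet_derivative (\<lambda>y. a y * dirderiv b y v + dirderiv a y v * b y) (at x) v
     = a x * d2 v b x + dirderiv a x v * dirderiv b x v
       + (dirderiv a x v * dirderiv b x v + d2 v a x * b x)"
    using x
    by (simp add: frechet_derivative_add_at frechet_derivative_mult_at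
        smooth_on_differentiable_at[OF a] smooth_on_differentiable_at[OF b]
        dirderiv_differentiable_at[OF a] dirderiv_differentiable_at[OF b] d2_eq)
  ultimately show ?thesis by (simp add: d2_eq algebra_simps)
qed

lemma dirderiv_power:
  fixes u :: "'a::real_normed_vector \<Rightarrow> real"
  assumes "u differentiable at y"
  shows "dirderiv (\<lambda>y. u y ^ k) y v = real k * u y ^ (k - 1) * dirderiv u y v"
proof -
  have "((\<lambda>y. u y ^ k) has_derivative (\<lambda>h. of_nat k * dirderiv u y h * u y ^ (k - 1))) (at y)"
    by (rule has_derivative_power) (use assms frechet_derivative_works in blast)
  then show ?thesis by (simp add: frechet_derivative_at[symmetric] algebra_simps)
qed

lemma d2_power:
  fixes u :: "'a::real_normed_vector \<Rightarrow> real"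
  assumes u: "smooth_on S u" and x: "x \<in> S"
  shows "d2 v (\<lambda>y. u y ^ k) x
    = real k * (real (k - 1) * u x ^ (k - 2) * (dirderiv u x v)^2 + u x ^ (k - 1) * d2 v u x)"
proof -
  have S: "open S" using u smooth_on_open by blast
  have "frechet_derivative (\<lambda>y. dirderiv (\<lambda>y. u y ^ k) y v) (at x)
      = frechet_derivative (\<lambda>y. (real k * u y ^ (k - 1)) * dirderiv u y v) (at x)"
    by (rule frechet_derivative_cong_open[OF S x])
      (simp add: dirderiv_power smooth_on_differentiable_at[OF u])
  moreover have "frechet_derivative (\<lambda>y. (real k * u y ^ (k - 1)) * dirderiv u y v) (at x) v
     = (real k * u x ^ (k - 1)) * d2 v u x
       + real k * (real (k - 1) * u x ^ (k - 1 - 1) * dirderiv u x v) * dirderiv u x v"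
  proof -
    have du: "u differentiable at x" using smooth_on_differentiable_at[OF u x] .
    have "(\<lambda>y. real k * u y ^ (k - 1)) differentiable at x"
      using du by (intro differentiable_mult differentiable_const differentiable_power)
    moreover have "dirderiv (\<lambda>y. real k * u y ^ (k - 1)) x v
        = real k * (real (k - 1) * u x ^ (k - 1 - 1) * dirderiv u x v)"
      using du by (simp add: frechet_derivative_cmult_at differentiable_power dirderiv_power)
    ultimately show ?thesis
      using dirderiv_differentiable_at[OF u x] by (simp add: frechet_derivative_mult_at d2_eq)
  qed
  ultimately show ?thesis
    by (simp add: d2_eq power2_eq_square algebra_simps diff_diff_left numeral_2_eq_2)
qed

definition grad_pairing :: "('n::finite pt \<Rightarrow> real) \<Rightarrow> ('n pt \<Rightarrow> real) \<Rightarrow> 'n pt \<Rightarrow> real" where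
  "grad_pairing a b x = (1/4) *
     ((dirderiv a x (1, 0) * dirderiv b x (1, 0) + dirderiv a x (\<i>, 0) * dirderiv b x (\<i>, 0))
     - (\<Sum>j\<in>UNIV. dirderiv a x (0, axis j 1) * dirderiv b x (0, axis j 1)
         + dirderiv a x (0, axis j \<i>) * dirderiv b x (0, axis j \<i>)))"

lemma Delta_mult:
  fixes a b :: "'n::finite pt \<Rightarrow> real"
  assumes a: "smooth_on S a" and b: "smooth_on S b" and x: "x \<in> S"
  shows "Delta (\<lambda>y. a y * b y) x = Delta a x * b x + 2 * grad_pairing a b x + a x * Delta b x"
  unfolding Delta_def grad_pairing_def d2_mult[OF a b x]
  by (simp add: algebra_simps sum.distrib sum_distrib_left sum_distrib_right sum_subtractf)

lemma Delta_power:
  fixes u :: "'n::finite pt \<Rightarrow> real"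
  assumes u: "smooth_on S u" and x: "x \<in> S"
  shows "Delta (\<lambda>y. u y ^ k) x
    = real k * real (k - 1) * u x ^ (k - 2) * grad_pairing u u x
      + real k * u x ^ (k - 1) * Delta u x"
  unfolding Delta_def grad_pairing_def d2_power[OF u x]
  by (simp add: algebra_simps sum.distrib sum_distrib_left sum_distrib_right sum_subtractf
      power2_eq_square)

lemma grad_pairing_power:
  fixes u :: "'n::finite pt \<Rightarrow> real"
  assumes u: "u differentiable at x"
  shows "grad_pairing (\<lambda>y. u y ^ k) b x = real k * u x ^ (k - 1) * grad_pairing u b x"
  unfolding grad_pairing_def dirderiv_power[OF u]
  by (simp add: algebra_simps sum.distrib sum_distrib_left sum_distrib_right sum_subtractf)

lemma smooth_on_d2: "smooth_on S u \<Longrightarrow> smooth_on S (d2 v u)"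
  unfolding d2_def by (simp add: smooth_on_dirderiv)

lemma smooth_on_Delta:
  fixes u :: "'n::finite pt \<Rightarrow> real"
  assumes u: "smooth_on S u"
  shows "smooth_on S (Delta u)"
proof -
  have S: "open S" using u smooth_on_open by blast
  show ?thesis
    unfolding Delta_def[abs_def]
    by (intro smooth_on_mult smooth_on_const[OF S] smooth_on_diff smooth_on_add smooth_on_d2[OF u]
        smooth_on_sum[OF S])
qed

lemma frechet_derivative_diff_cmult_at:
  fixes g h :: "'a::real_normed_vector \<Rightarrow> real"
  assumes "g differentiable at y" "h differentiable at y"
  shows "dirderiv (\<lambda>y. g y - c * h y) y w = dirderiv g y w - c * dirderiv h y w"
proof -
  have "((\<lambda>y. g y - c * h y) has_derivative (\<lambda>w. dirderiv g y w - c * dirderiv h y w)) (at y)"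
    using assms unfolding frechet_derivative_works
    by (auto intro!: derivative_eq_intros)
  then show ?thesis by (simp add: frechet_derivative_at[symmetric])
qed

lemma d2_diff_cmult:
  fixes a b :: "'a::real_normed_vector \<Rightarrow> real"
  assumes a: "smooth_on S a" and b: "smooth_on S b" and x: "x \<in> S"
  shows "d2 v (\<lambda>y. a y - c * b y) x = d2 v a x - c * d2 v b x"
proof -
  have S: "open S" using a smooth_on_open by blast
  have "frechet_derivative (\<lambda>y. dirderiv (\<lambda>y. a y - c * b y) y v) (at x)
      = frechet_derivative (\<lambda>y. dirderiv a y v - c * dirderiv b y v) (at x)"
    by (rule frechet_derivative_cong_open[OF S x])
      (intro frechet_derivative_diff_cmult_at smooth_on_differentiable_at[OF a]
        smooth_on_differentiable_at[OF b])
  then show ?thesis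
    unfolding d2_eq
    using frechet_derivative_diff_cmult_at[OF dirderiv_differentiable_at[OF a x]
        dirderiv_differentiable_at[OF b x]]
    by simp
qed

lemma Delta_diff_cmult:
  fixes a b :: "'n::finite pt \<Rightarrow> real"
  assumes a: "smooth_on S a" and b: "smooth_on S b" and x: "x \<in> S"
  shows "Delta (\<lambda>y. a y - c * b y) x = Delta a x - c * Delta b x"
  unfolding Delta_def d2_diff_cmult[OF a b x]
  by (simp add: algebra_simps sum.distrib sum_distrib_left sum_subtractf)

lemma Delta_cong_open:
  assumes S: "open S" and x: "x \<in> S" and eq: "\<And>y. y \<in> S \<Longrightarrow> u y = u' y"
  shows "Delta u x = Delta u' x"
proof -
  have "d2 v u x = d2 v u' x" for v
    unfolding d2_def by (rule dirderivs_cong_open[OF S eq x])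
  then show ?thesis by (simp add: Delta_def)
qed

lemma Lform_inner: "Lform = (\<lambda>z::'n::finite pt. fst z \<bullet> fst z - snd z \<bullet> snd z)"
  by (simp add: fun_eq_iff Lform_eq r0sq_inner r1sq_inner)

lemma has_derivative_Lform:
  "((Lform :: 'n::finite pt \<Rightarrow> real) has_derivative
    (\<lambda>h. 2 * (fst y \<bullet> fst h - snd y \<bullet> snd h))) (at y)"
proof -
  have "((\<lambda>z::'n pt. fst z \<bullet> fst z - snd z \<bullet> snd z) has_derivative
     (\<lambda>h. fst y \<bullet> fst h + fst h \<bullet> fst y - (snd y \<bullet> snd h + snd h \<bullet> snd y))) (at y)"
    by (auto intro!: derivative_eq_intros)
  then show ?thesis unfolding Lform_inner by (simp add: inner_commute algebra_simps)
qed

lemma dirderiv_Lform: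
  "dirderiv (Lform :: 'n::finite pt \<Rightarrow> real) y v = 2 * (fst y \<bullet> fst v - snd y \<bullet> snd v)"
  by (simp add: frechet_derivative_at[OF has_derivative_Lform, symmetric])

lemma d2_Lform: "d2 v (Lform :: 'n::finite pt \<Rightarrow> real) x = 2 * (fst v \<bullet> fst v - snd v \<bullet> snd v)"
proof -
  have "((\<lambda>y::'n pt. 2 * (fst y \<bullet> fst v - snd y \<bullet> snd v)) has_derivative
      (\<lambda>h. 2 * (fst h \<bullet> fst v - snd h \<bullet> snd v))) (at x)"
    by (auto intro!: derivative_eq_intros)
  then show ?thesis
    unfolding d2_eq dirderiv_Lform by (simp add: frechet_derivative_at[symmetric])
qed

lemma inner_ii_complex: "\<i> \<bullet> \<i> = (1::real)"
  by (simp add: inner_complex_def)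

lemma Delta_Lform: "Delta (Lform :: 'n::finite pt \<Rightarrow> real) x = 1 + real CARD('n)"
  unfolding Delta_def d2_Lform by (simp add: inner_axis_axis inner_ii_complex)

lemma inner_1_complex: "z \<bullet> (1::complex) = Re z" and inner_i_complex: "z \<bullet> \<i> = Im z"
  by (simp_all add: inner_complex_def)

lemma dirderiv_Lform_basis:
  "dirderiv (Lform :: 'n::finite pt \<Rightarrow> real) x (1, 0) = 2 * Re (fst x)"
  "dirderiv (Lform :: 'n::finite pt \<Rightarrow> real) x (\<i>, 0) = 2 * Im (fst x)"
  "dirderiv (Lform :: 'n::finite pt \<Rightarrow> real) x (0, axis j 1) = - 2 * Re (snd x $ j)"
  "dirderiv (Lform :: 'n::finite pt \<Rightarrow> real) x (0, axis j \<i>) = - 2 * Im (snd x $ j)"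
  by (simp_all add: dirderiv_Lform inner_axis inner_1_complex inner_i_complex)

lemma grad_pairing_Lform_Lform: "grad_pairing (Lform :: 'n::finite pt \<Rightarrow> real) Lform x = Lform x"
proof -
  have cm: "cmod z * cmod z = Re z * Re z + Im z * Im z" for z
  proof -
    have "cmod z ^ 2 = Re z ^ 2 + Im z ^ 2" by (rule cmod_power2)
    then show ?thesis by (simp add: power2_eq_square)
  qed
  show ?thesis
    unfolding grad_pairing_def dirderiv_Lform_basis Lform_def
    by (simp add: cm sum_distrib_left algebra_simps power2_eq_square sum.distrib)
qed

lemma pt_eq_sum_basis:
  fixes z :: "'n::finite pt"
  shows "z = Re (fst z) *\<^sub>R (1, 0) + Im (fst z) *\<^sub>R (\<i>, 0)
    + (\<Sum>j\<in>UNIV. Re (snd z $ j) *\<^sub>R (0, axis j 1) + Im (snd z $ j) *\<^sub>R (0, axis j \<i>))"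
proof -
  let ?w = "\<Sum>j\<in>UNIV. Re (snd z $ j) *\<^sub>R ((0::complex), axis j (1::complex))
    + Im (snd z $ j) *\<^sub>R (0, axis j \<i>)"
  have "snd ?w $ i = snd z $ i" for i
  proof -
    have "snd ?w $ i
        = (\<Sum>j\<in>UNIV. (Re (snd z $ j) *\<^sub>R axis j (1::complex) + Im (snd z $ j) *\<^sub>R axis j \<i>) $ i)"
      by (simp add: snd_sum)
    also have "\<dots> = (\<Sum>j\<in>UNIV. if j = i then Re (snd z $ i) *\<^sub>R 1 + Im (snd z $ i) *\<^sub>R \<i> else 0)"
      by (rule sum.cong) (auto simp: axis_def)
    also have "\<dots> = snd z $ i" by (simp add: complex_eq_iff)
    finally show ?thesis .
  qed
  then have "snd ?w = snd z" by (simp add: vec_eq_iff)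
  moreover have "fst ?w = 0" by (simp add: fst_sum)
  ultimately show ?thesis by (simp add: prod_eq_iff complex_eq_iff)
qed

lemma grad_pairing_Lform:
  fixes b :: "'n::finite pt \<Rightarrow> real"
  assumes b: "b differentiable at x"
  shows "grad_pairing Lform b x = (1/2) * dirderiv b x x"
proof -
  have lin: "linear (frechet_derivative b (at x))"
    using b by (rule linear_frechet_derivative)
  have "dirderiv b x x = dirderiv b x (Re (fst x) *\<^sub>R (1, 0) + Im (fst x) *\<^sub>R (\<i>, 0)
    + (\<Sum>j\<in>UNIV. Re (snd x $ j) *\<^sub>R (0, axis j 1) + Im (snd x $ j) *\<^sub>R (0, axis j \<i>)))"
    using pt_eq_sum_basis[of x] by simp
  also have "\<dots> = Re (fst x) * dirderiv b x (1, 0) + Im (fst x) * dirderiv b x (\<i>, 0)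
    + (\<Sum>j\<in>UNIV. Re (snd x $ j) * dirderiv b x (0, axis j 1)
        + Im (snd x $ j) * dirderiv b x (0, axis j \<i>))"
    unfolding linear_add[OF lin] linear_sum[OF lin] o_def linear_scale[OF lin] by simp
  finally show ?thesis
    unfolding grad_pairing_def dirderiv_Lform_basis
    by (simp add: algebra_simps sum_distrib_left sum_subtractf sum.distrib sum_negf)
qed

lemma Delta_Lform_power:
  fixes x :: "'n::finite pt"
  shows "Delta (\<lambda>y. Lform y ^ k) x = real k * (real k + real CARD('n)) * Lform x ^ (k - 1)"
proof -
  have "Delta (\<lambda>y. Lform y ^ k) x = real k * real (k - 1) * Lform x ^ (k - 2) * Lform x
      + real k * Lform x ^ (k - 1) * (1 + real CARD('n))"
    using Delta_power[OF smooth_on_Lform[OF open_UNIV] UNIV_I, of k]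
    by (simp add: grad_pairing_Lform_Lform Delta_Lform)
  moreover have "real k * real (k - 1) * Lform x ^ (k - 2) * Lform x
      = real k * real (k - 1) * Lform x ^ (k - 1)"
  proof (cases "k \<le> 1")
    case False
    then have "k - 1 = Suc (k - 2)" by simp
    then show ?thesis by (simp add: mult.commute)
  qed auto
  ultimately show ?thesis by (cases k) (simp_all add: algebra_simps)
qed

section \<open>Homogeneity\<close>

text \<open>\<open>homog_neg m e\<close>: \<open>e\<close> is homogeneous of degree \<open>(-m,-m)\<close> on \<open>\<complex>\<^sup>n\<^sup>+\<^sup>1 - {0}\<close>.\<close>

definition homog_neg :: "nat \<Rightarrow> ('n::finite pt \<Rightarrow> real) \<Rightarrow> bool" where
  "homog_neg m e \<longleftrightarrow> (\<forall>z. z \<noteq> 0 \<longrightarrow> (\<forall>c. c \<noteq> 0 \<longrightarrow> (cmod c)^(2*m) * e (cscale c z) = e z))"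

lemma homog_neg_0_iff: "homog_neg 0 F \<longleftrightarrow> homog00 F"
  by (simp add: homog00_def homog_neg_def)

lemma dirderiv_self_homog_neg:
  fixes e :: "'n::finite pt \<Rightarrow> real"
  assumes h: "homog_neg m e" and x: "x \<noteq> 0" and d: "e differentiable at x"
  shows "dirderiv e x x = - 2 * real m * e x"
proof -
  let ?g = "\<lambda>t::real. t ^ (2*m) * e (t *\<^sub>R x)"
  have de0: "(e has_derivative dirderiv e x) (at x)"
    using d unfolding frechet_derivative_works .
  then have de: "(e has_derivative dirderiv e x) (at (1 *\<^sub>R x))" by simp
  have sx: "((\<lambda>t::real. t *\<^sub>R x) has_derivative (\<lambda>s. s *\<^sub>R x)) (at 1)"
    by (auto intro!: derivative_eq_intros)
  have "((\<lambda>t::real. e (t *\<^sub>R x)) has_derivative (\<lambda>s. dirderiv e x (s *\<^sub>R x))) (at 1)"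
    using has_derivative_compose[OF sx de] by (simp add: o_def)
  then have g1: "(?g has_derivative (\<lambda>s. s * (real (2*m) * e x) + dirderiv e x (s *\<^sub>R x))) (at 1)"
    by (auto intro!: derivative_eq_intros simp: algebra_simps)
  have "(?g has_derivative (\<lambda>s. 0)) (at 1)"
  proof (rule has_derivative_transform_within_open[OF has_derivative_const[of "e x"],
        where s="{0<..}"])
    fix t :: real assume "t \<in> {0<..}"
    then have t: "0 < t" by simp
    have "(cmod (complex_of_real t))^(2*m) * e (cscale (complex_of_real t) x) = e x"
      using h x t unfolding homog_neg_def by (metis of_real_eq_0_iff order_less_irrefl)
    then show "e x = ?g t" using t by (simp add: cscale_of_real)
  qed auto
  then have "(\<lambda>s. s * (real (2*m) * e x) + dirderiv e x (s *\<^sub>R x)) = (\<lambda>s. 0)"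
    using g1 has_derivative_unique by blast
  from fun_cong[OF this, of 1] have "real (2*m) * e x + dirderiv e x x = 0" by simp
  then show ?thesis by simp
qed

lemma nullcone_limit_off_nullcone:
  assumes "z \<in> nullcone"
  obtains zs where "zs \<longlonglongrightarrow> z" "\<And>m. zs m \<noteq> 0" "\<And>m. Lform (zs m) \<noteq> 0"
proof -
  have r: "r0sq z = r1sq z" "0 < r0sq z" using nullcone_r0sq_eq_r1sq[OF assms] by auto
  define a where "a = (\<lambda>m::nat. 1 + inverse (real (Suc m)))"
  define zs where "zs = (\<lambda>m. (complex_of_real (a m) * fst z, snd z))"
  have a1: "a m > 1" for m by (simp add: a_def)
  have "a \<longlonglongrightarrow> 1"
    unfolding a_def using tendsto_add[OF tendsto_const LIMSEQ_inverse_real_of_nat, of 1] by simp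
  then have "zs \<longlonglongrightarrow> z"
    unfolding zs_def
    using tendsto_Pair[OF tendsto_mult[OF tendsto_of_real tendsto_const,
          of a 1 sequentially "fst z"]
        tendsto_const, of "snd z"]
    by simp
  moreover have "zs m \<noteq> 0" for m
    using r(2) a1[of m] by (auto simp: zs_def pt_eq_0_iff r0sq_pos[symmetric])
  moreover have "Lform (zs m) \<noteq> 0" for m
  proof -
    have "Lform (zs m) = (a m)^2 * r0sq z - r1sq z"
      by (simp add: zs_def Lform_eq r0sq_def r1sq_def norm_mult power_mult_distrib)
    also have "\<dots> = ((a m)^2 - 1) * r0sq z" using r by (simp add: algebra_simps)
    finally have "Lform (zs m) = ((a m)^2 - 1) * r0sq z" .
    moreover have "0 < (a m)^2 - 1" using one_less_power[OF a1[of m], of 2] by linarith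
    ultimately show ?thesis using r(2) by simp
  qed
  ultimately show ?thesis using that by blast
qed

lemma continuous_eq_off_nullcone:
  fixes u v :: "'n::finite pt \<Rightarrow> real"
  assumes "continuous_on (- {0}) u" "continuous_on (- {0}) v"
    and eq: "\<And>z. z \<noteq> 0 \<Longrightarrow> Lform z \<noteq> 0 \<Longrightarrow> u z = v z"
    and z: "z \<noteq> 0"
  shows "u z = v z"
proof (cases "Lform z = 0")
  case True
  then have "z \<in> nullcone" using z by (simp add: nullcone_def)
  then obtain zs where zs: "zs \<longlonglongrightarrow> z" "\<And>m. zs m \<noteq> 0" "\<And>m. Lform (zs m) \<noteq> 0"
    using nullcone_limit_off_nullcone by blast
  have "isCont u z" "isCont v z"
    using assms(1,2) z continuous_on_eq_continuous_at[of "- {0}"] by auto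
  then have "(\<lambda>m. u (zs m)) \<longlonglongrightarrow> u z" "(\<lambda>m. v (zs m)) \<longlonglongrightarrow> v z"
    using isCont_tendsto_compose zs(1) by blast+
  moreover have "(\<lambda>m. u (zs m)) = (\<lambda>m. v (zs m))"
    using eq zs(2,3) by auto
  ultimately show ?thesis using LIMSEQ_unique by metis
qed (use eq z in blast)

lemma vanishes_on_nullcone_if_Lform_multiple:
  fixes h q :: "'n::finite pt \<Rightarrow> real"
  assumes "continuous_on (- {0}) h" "continuous_on (- {0}) q"
    and eq: "\<And>z. z \<noteq> 0 \<Longrightarrow> Lform z \<noteq> 0 \<Longrightarrow> h z = Lform z * q z"
    and z: "z \<in> nullcone"
  shows "h z = 0"
proof -
  have "continuous_on (- {0}) (Lform :: 'n pt \<Rightarrow> real)"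
    by (rule smooth_on_continuous_on[OF smooth_on_Lform[OF open_nonzero]])
  then have "h z = Lform z * q z"
    using continuous_eq_off_nullcone[OF assms(1) continuous_on_mult[OF _ assms(2)] eq] z
    by (simp add: nullcone_def)
  then show ?thesis using z by (simp add: nullcone_def)
qed

lemma homog_neg_quotient:
  fixes u e :: "'n::finite pt \<Rightarrow> real"
  assumes u: "homog_neg m u" and e: "continuous_on (- {0}) e"
    and eq: "\<And>z. z \<noteq> 0 \<Longrightarrow> u z = Lform z ^ k * e z"
  shows "homog_neg (m + k) e"
  unfolding homog_neg_def
proof (intro allI impI)
  fix z :: "'n pt" and c :: complex assume z: "z \<noteq> 0" and c: "c \<noteq> 0"
  have cz: "cscale c y \<noteq> 0" if "y \<noteq> 0" for y using that cscale_eq_0_iff[OF c, of y] by simp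
  have "cscale c ` (- {0}) \<subseteq> - {0}" by (rule image_subsetI) (simp add: cz)
  then have "continuous_on (- {0}) (\<lambda>z. e (cscale c z))"
    by (rule continuous_on_compose2[OF e linear_continuous_on[OF bounded_linear_cscale]])
  then have cont: "continuous_on (- {0}) (\<lambda>z. (cmod c)^(2 * (m + k)) * e (cscale c z))"
    by (intro continuous_intros)
  have off: "(cmod c)^(2 * (m + k)) * e (cscale c y) = e y" if y: "y \<noteq> 0" "Lform y \<noteq> 0" for y
  proof -
    have pw: "(cmod c)^(2 * (m + k)) = (cmod c)^(2 * m) * ((cmod c)^2)^k"
      by (simp only: distrib_left power_add power_mult)
    have "Lform y ^ k * ((cmod c)^(2 * (m + k)) * e (cscale c y))
        = (cmod c)^(2 * m) * (((cmod c)^2 * Lform y) ^ k * e (cscale c y))"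
      unfolding pw power_mult_distrib by (simp only: mult_ac)
    also have "\<dots> = (cmod c)^(2 * m) * u (cscale c y)"
      using eq[OF cz[OF y(1)]] by (simp add: Lform_cscale)
    also have "\<dots> = u y"
      using u y(1) c unfolding homog_neg_def by blast
    also have "\<dots> = Lform y ^ k * e y"
      using y(1) by (rule eq)
    finally show ?thesis using y(2) by simp
  qed
  show "(cmod c)^(2 * (m + k)) * e (cscale c z) = e z"
    by (rule continuous_eq_off_nullcone[OF cont e off z])
qed

lemma Delta_Lform_power_mult:
  fixes e :: "'n::finite pt \<Rightarrow> real"
  assumes e: "smooth_on (- {0}) e" "homog_neg k e" and x: "x \<noteq> 0" and k: "1 \<le> k"
  shows "Delta (\<lambda>y. Lform y ^ k * e y) x
       = real k * (real CARD('n) - real k) * Lform x ^ (k - 1) * e x + Lform x ^ k * Delta e x"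
proof -
  have sL: "smooth_on (- {0}) (\<lambda>y::'n pt. Lform y ^ k)"
    by (rule smooth_on_power[OF smooth_on_Lform[OF open_nonzero]])
  have dL: "(Lform :: 'n pt \<Rightarrow> real) differentiable at x"
    using has_derivative_Lform differentiable_def by blast
  have de: "e differentiable at x" using smooth_on_differentiable_at[OF e(1)] x by simp
  have "grad_pairing (\<lambda>y. Lform y ^ k) e x = - (real k * real k) * Lform x ^ (k - 1) * e x"
    using grad_pairing_power[OF dL, of k e] grad_pairing_Lform[OF de]
      dirderiv_self_homog_neg[OF e(2) x de] by simp
  moreover have "Delta (\<lambda>y. Lform y ^ k * e y) x
      = Delta (\<lambda>y. Lform y ^ k) x * e x + 2 * grad_pairing (\<lambda>y. Lform y ^ k) e x
        + Lform x ^ k * Delta e x"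
    using Delta_mult[OF sL e(1)] x by simp
  ultimately show ?thesis
    using k by (simp add: Delta_Lform_power of_nat_diff algebra_simps)
qed

definition hessian :: "('a::real_normed_vector \<Rightarrow> real) \<Rightarrow> 'a \<Rightarrow> 'a \<Rightarrow> 'a \<Rightarrow> real" where
  "hessian F p v w = frechet_derivative (\<lambda>y. dirderiv F y v) (at p) w"

lemma d2_eq_hessian: "d2 v F x = hessian F x v v"
  by (simp add: d2_eq hessian_def)

context
  fixes F :: "'a::real_normed_vector \<Rightarrow> real" and S
  assumes F: "smooth_on S F"
begin

lemma hessian_linear_right:
  assumes p: "p \<in> S"
  shows "hessian F p v (a *\<^sub>R w1 + b *\<^sub>R w2) = a * hessian F p v w1 + b * hessian F p v w2"
proof -
  have "linear (frechet_derivative (\<lambda>y. dirderiv F y v) (at p))"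
    by (rule linear_frechet_derivative[OF dirderiv_differentiable_at[OF F p]])
  then show ?thesis unfolding hessian_def by (simp add: linear_add linear_scale)
qed

lemma hessian_linear_left:
  assumes p: "p \<in> S"
  shows "hessian F p (a *\<^sub>R v1 + b *\<^sub>R v2) w = a * hessian F p v1 w + b * hessian F p v2 w"
proof -
  have S: "open S" using F smooth_on_open by blast
  have "frechet_derivative (\<lambda>y. dirderiv F y (a *\<^sub>R v1 + b *\<^sub>R v2)) (at p)
     = frechet_derivative (\<lambda>y. a * dirderiv F y v1 + b * dirderiv F y v2) (at p)"
  proof (rule frechet_derivative_cong_open[OF S p])
    fix y assume "y \<in> S"
    then have "linear (frechet_derivative F (at y))"
      using linear_frechet_derivative smooth_on_differentiable_at[OF F] by blast
    then show "dirderiv F y (a *\<^sub>R v1 + b *\<^sub>R v2) = a * dirderiv F y v1 + b * dirderiv F y v2"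
      by (simp add: linear_add linear_scale)
  qed
  moreover have "frechet_derivative (\<lambda>y. a * dirderiv F y v1 + b * dirderiv F y v2) (at p) w
     = a * hessian F p v1 w + b * hessian F p v2 w"
    using dirderiv_differentiable_at[OF F p]
    by (simp add: frechet_derivative_add_at frechet_derivative_cmult_at hessian_def
        differentiable_mult)
  ultimately show ?thesis by (simp add: hessian_def)
qed

text \<open>Rotating the pair of directions \<open>e, f\<close> by the complex number \<open>a + i b\<close> multiplies the
  sum of the pure second derivatives by \<open>|a + i b|\<^sup>2\<close>; this is why \<open>Delta F\<close> of a function
  of degree \<open>(0,0)\<close> has degree \<open>(-1,-1)\<close>.\<close>

lemma hessian_rotation_sum:
  assumes p: "p \<in> S"
  shows "hessian F p (a *\<^sub>R e + b *\<^sub>R f) (a *\<^sub>R e + b *\<^sub>R f)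
      + hessian F p ((- b) *\<^sub>R e + a *\<^sub>R f) ((- b) *\<^sub>R e + a *\<^sub>R f)
    = (a^2 + b^2) * (hessian F p e e + hessian F p f f)"
  unfolding hessian_linear_left[OF p] hessian_linear_right[OF p]
  by (simp add: algebra_simps power2_eq_square)

end

lemma cscale_basis:
  fixes c :: complex
  shows "cscale c ((1::complex), 0::complex^'n::finite) = Re c *\<^sub>R (1, 0) + Im c *\<^sub>R (\<i>, 0)"
    "cscale c ((\<i>::complex), 0::complex^'n::finite) = (- Im c) *\<^sub>R (1, 0) + Re c *\<^sub>R (\<i>, 0)"
    "cscale c ((0::complex), axis j (1::complex) :: complex^'n::finite)
      = Re c *\<^sub>R (0, axis j 1) + Im c *\<^sub>R (0, axis j \<i>)"
    "cscale c ((0::complex), axis j \<i> :: complex^'n::finite)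
      = (- Im c) *\<^sub>R (0, axis j 1) + Re c *\<^sub>R (0, axis j \<i>)"
  by (auto simp: cscale_def prod_eq_iff vec_eq_iff complex_eq_iff axis_def)

context
  fixes F :: "'n::finite pt \<Rightarrow> real"
  assumes F: "smooth_on (- {0}) F" and h: "homog00 F"
begin

lemma dirderiv_homog00:
  assumes y: "y \<noteq> 0" and c: "c \<noteq> 0"
  shows "dirderiv F y v = dirderiv F (cscale c y) (cscale c v)"
proof -
  have "frechet_derivative F (at y) = frechet_derivative (F \<circ> cscale c) (at y)"
    by (rule frechet_derivative_cong_open[OF open_nonzero]) (use y h c in \<open>auto simp: homog00_def\<close>)
  also have "\<dots> = frechet_derivative F (at (cscale c y)) \<circ> frechet_derivative (cscale c) (at y)"
  proof (rule frechet_derivative_compose)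
    show "cscale c differentiable at y"
      using bounded_linear_cscale bounded_linear_imp_differentiable by blast
    have "cscale c y \<in> - {0}" using cscale_eq_0_iff[OF c, of y] y by simp
    then show "F differentiable at (cscale c y)"
      by (rule smooth_on_differentiable_at[OF F])
  qed
  also have "frechet_derivative (cscale c) (at y) = cscale c"
    by (rule frechet_derivative_at[OF bounded_linear_imp_has_derivative[OF bounded_linear_cscale],
          symmetric])
  finally show ?thesis by simp
qed

lemma d2_homog00:
  assumes x: "x \<noteq> 0" and c: "c \<noteq> 0"
  shows "d2 v F x = hessian F (cscale c x) (cscale c v) (cscale c v)"
proof -
  let ?G = "\<lambda>y'. dirderiv F y' (cscale c v)"
  have "frechet_derivative (\<lambda>y. dirderiv F y v) (at x) = frechet_derivative (?G \<circ> cscale c) (at x)"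
    by (rule frechet_derivative_cong_open[OF open_nonzero]) (use x dirderiv_homog00[OF _ c] in auto)
  also have "\<dots> = frechet_derivative ?G (at (cscale c x)) \<circ> frechet_derivative (cscale c) (at x)"
  proof (rule frechet_derivative_compose)
    show "cscale c differentiable at x"
      using bounded_linear_cscale bounded_linear_imp_differentiable by blast
    have "cscale c x \<in> - {0}" using cscale_eq_0_iff[OF c, of x] x by simp
    then show "?G differentiable at (cscale c x)"
      by (rule dirderiv_differentiable_at[OF F])
  qed
  also have "frechet_derivative (cscale c) (at x) = cscale c"
    by (rule frechet_derivative_at[OF bounded_linear_imp_has_derivative[OF bounded_linear_cscale],
          symmetric])
  finally show ?thesis by (simp add: d2_eq hessian_def)
qed

lemma Delta_homog00_cscale:
  assumes x: "x \<noteq> 0" and c: "c \<noteq> 0"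
  shows "Delta F x = (cmod c)^2 * Delta F (cscale c x)"
proof -
  let ?p = "cscale c x"
  have p: "?p \<in> - {0}" using x cscale_eq_0_iff[OF c, of x] by simp
  have cm: "(cmod c)^2 = (Re c)^2 + (Im c)^2" by (rule cmod_power2)
  have A: "d2 (1, 0) F x + d2 (\<i>, 0) F x = (cmod c)^2 * (d2 (1, 0) F ?p + d2 (\<i>, 0) F ?p)"
    unfolding d2_homog00[OF x c] unfolding cscale_basis d2_eq_hessian cm
    by (rule hessian_rotation_sum[OF F p])
  have B: "d2 (0, axis j 1) F x + d2 (0, axis j \<i>) F x
      = (cmod c)^2 * (d2 (0, axis j 1) F ?p + d2 (0, axis j \<i>) F ?p)" for j
    unfolding d2_homog00[OF x c] unfolding cscale_basis d2_eq_hessian cm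
    by (rule hessian_rotation_sum[OF F p])
  show ?thesis
    unfolding Delta_def A B by (simp add: sum_distrib_left algebra_simps)
qed

lemma homog_neg_Delta: "homog_neg 1 (Delta F)"
  unfolding homog_neg_def using Delta_homog00_cscale by simp

end

section \<open>Division by the defining function of the null cone\<close>

text \<open>Hadamard's lemma along the \<open>\<zeta>\<^sub>0\<close>-direction: for \<open>z\<close> off the coordinate hyperplanes,
  \<open>cone_path (t, z)\<close> rescales \<open>\<zeta>\<^sub>0\<close> affinely from a point of the null cone (\<open>t = 0\<close>) to \<open>z\<close>
  (\<open>t = 1\<close>). If \<open>u\<close> vanishes on the cone, the fundamental theorem of calculus and
  \<open>\<rho>\<^sub>0 - \<rho>\<^sub>1 = L / (\<rho>\<^sub>0 + \<rho>\<^sub>1)\<close> exhibit \<open>u / L\<close> as a parametric integral, which is smooth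
  across the cone.\<close>

definition cone_path :: "real \<times> 'n::finite pt \<Rightarrow> 'n pt" where
  "cone_path p = (((rho1 (snd p) + fst p * (rho0 (snd p) - rho1 (snd p))) * inverse (rho0 (snd p)))
     *\<^sub>R fst (snd p), snd (snd p))"

definition hadamard_quotient :: "('n::finite pt \<Rightarrow> real) \<Rightarrow> 'n pt \<Rightarrow> real" where
  "hadamard_quotient u z = inverse (rho0 z * (rho0 z + rho1 z))
     * integral {0..1} (\<lambda>t. dirderiv u (cone_path (t, z)) (fst z, 0))"

definition div_Lform :: "('n::finite pt \<Rightarrow> real) \<Rightarrow> 'n pt \<Rightarrow> real" where
  "div_Lform u z = (if Lform z \<noteq> 0 then u z / Lform z else hadamard_quotient u z)"

lemma cone_path_inner:
  "cone_path p \<bullet> c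
    = ((rho1 (snd p) + fst p * (rho0 (snd p) - rho1 (snd p))) * inverse (rho0 (snd p)))
     * (fst (snd p) \<bullet> fst c) + snd (snd p) \<bullet> snd c"
  by (simp add: cone_path_def inner_prod_def)

lemma smooth_on_cone_path_inner:
  "smooth_on (UNIV \<times> both_nonzero) (\<lambda>p::real \<times> 'n::finite pt. cone_path p \<bullet> c)"
proof -
  have o: "open (UNIV \<times> both_nonzero :: (real \<times> 'n pt) set)"
    using open_both_nonzero by (intro open_Times) auto
  have rho: "smooth_on (UNIV \<times> both_nonzero) (\<lambda>p::real \<times> 'n pt. rho0 (snd p))"
    "smooth_on (UNIV \<times> both_nonzero) (\<lambda>p::real \<times> 'n pt. rho1 (snd p))"
    by (intro smooth_on_compose_snd smooth_on_rho0 smooth_on_rho1 open_UNIV)+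
  have "smooth_on (UNIV \<times> both_nonzero) (\<lambda>p::real \<times> 'n pt. inverse (rho0 (snd p)))"
    by (rule smooth_on_compose_pos[OF rho(1) _ smooth_on_inverse]) auto
  moreover have "smooth_on (UNIV \<times> both_nonzero) (\<lambda>p::real \<times> 'n pt. fst p)"
    by (rule smooth_on_bounded_linear[OF o bounded_linear_fst])
  moreover have "smooth_on (UNIV \<times> both_nonzero) (\<lambda>p::real \<times> 'n pt. fst (snd p) \<bullet> fst c)"
    by (rule smooth_on_bounded_linear[OF o])
      (intro bounded_linear_compose[OF bounded_linear_inner_left]
        bounded_linear_compose[OF bounded_linear_fst bounded_linear_snd])
  moreover have "smooth_on (UNIV \<times> both_nonzero) (\<lambda>p::real \<times> 'n pt. snd (snd p) \<bullet> snd c)"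
    by (rule smooth_on_bounded_linear[OF o])
      (intro bounded_linear_compose[OF bounded_linear_inner_left]
        bounded_linear_compose[OF bounded_linear_snd bounded_linear_snd])
  ultimately show ?thesis
    unfolding cone_path_inner using rho by (intro smooth_on_add smooth_on_mult smooth_on_diff)
qed

lemma cone_path_nonzero: "snd p \<in> both_nonzero \<Longrightarrow> cone_path p \<noteq> 0"
  by (simp add: cone_path_def pt_eq_0_iff)

lemma cone_path_affine:
  "cone_path (t, z)
    = cone_path (0, z) + t *\<^sub>R (((rho0 z - rho1 z) * inverse (rho0 z)) *\<^sub>R (fst z, 0))"
  by (simp add: cone_path_def prod_eq_iff algebra_simps scaleR_add_left)

lemma cone_path_1:
  assumes "z \<in> both_nonzero"
  shows "cone_path (1, z) = z"
proof -
  have "0 < rho0 z" using assms by simp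
  then show ?thesis by (simp add: cone_path_def prod_eq_iff)
qed

lemma cone_path_0_in_nullcone:
  assumes z: "z \<in> both_nonzero"
  shows "cone_path (0, z) \<in> nullcone"
proof -
  have rp: "0 < rho0 z" "0 < rho1 z" using z by auto
  have "r0sq (cone_path (0, z)) = (rho1 z * inverse (rho0 z))^2 * r0sq z"
    by (simp add: cone_path_def r0sq_def norm_scaleR power_mult_distrib)
  also have "\<dots> = r1sq z"
    using rp r0sq_nonneg[of z] r1sq_nonneg[of z]
    by (simp add: rho0_def rho1_def power_mult_distrib field_simps)
  finally have "Lform (cone_path (0, z)) = 0"
    by (simp add: Lform_eq cone_path_def r1sq_def)
  then show ?thesis using cone_path_nonzero[of "(0, z)"] z by (simp add: nullcone_def)
qed

context
  fixes u :: "'n::finite pt \<Rightarrow> real"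
  assumes u: "smooth_on (- {0}) u"
begin

lemma smooth_on_cone_path_integrand:
  "smooth_on (UNIV \<times> both_nonzero) (\<lambda>p. dirderiv u (cone_path p) (fst (snd p), 0))"
proof -
  have o: "open (UNIV \<times> both_nonzero :: (real \<times> 'n pt) set)"
    using open_both_nonzero by (intro open_Times) auto
  have "smooth_on (UNIV \<times> both_nonzero)
      (\<lambda>p. \<Sum>b\<in>Basis. ((fst (snd p), 0::complex^'n) \<bullet> b) * dirderiv u (cone_path p) b)"
  proof (intro smooth_on_sum[OF o] smooth_on_mult)
    fix b :: "'n pt"
    show "smooth_on (UNIV \<times> both_nonzero) (\<lambda>p::real \<times> 'n pt. (fst (snd p), 0::complex^'n) \<bullet> b)"
      by (rule smooth_on_bounded_linear[OF o])
        (intro bounded_linear_compose[OF bounded_linear_inner_left] bounded_linear_Pair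
          bounded_linear_zero bounded_linear_compose[OF bounded_linear_fst bounded_linear_snd])
    show "smooth_on (UNIV \<times> both_nonzero) (\<lambda>p. dirderiv u (cone_path p) b)"
      by (rule smooth_on_compose[OF o smooth_on_cone_path_inner _ smooth_on_dirderiv[OF u]])
        (auto simp: cone_path_nonzero)
  qed
  then show ?thesis
  proof (rule smooth_on_cong)
    fix p :: "real \<times> 'n pt" assume "p \<in> UNIV \<times> both_nonzero"
    then have "cone_path p \<in> - {0}" using cone_path_nonzero[of p] by (simp add: mem_Times_iff)
    then have "u differentiable at (cone_path p)" by (rule smooth_on_differentiable_at[OF u])
    then show "(\<Sum>b\<in>Basis. ((fst (snd p), 0::complex^'n) \<bullet> b) * dirderiv u (cone_path p) b)
        = dirderiv u (cone_path p) (fst (snd p), 0)"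
      by (rule dirderiv_euclidean_expansion[symmetric])
  qed
qed

lemma smooth_on_hadamard_quotient: "smooth_on both_nonzero (hadamard_quotient u)"
proof -
  have "smooth_on both_nonzero (\<lambda>z::'n pt. inverse (rho0 z * (rho0 z + rho1 z)))"
    by (rule smooth_on_compose_pos[OF smooth_on_mult[OF smooth_on_rho0
          smooth_on_add[OF smooth_on_rho0 smooth_on_rho1]] _ smooth_on_inverse])
      (auto intro!: mult_pos_pos add_pos_pos)
  then show ?thesis
    unfolding hadamard_quotient_def[abs_def]
    using smooth_on_integral_param[OF open_both_nonzero smooth_on_cone_path_integrand]
    by (intro smooth_on_mult) simp_all
qed

lemma has_vector_derivative_along_cone_path:
  assumes z: "z \<in> both_nonzero"
  shows "((\<lambda>t. u (cone_path (t, z))) has_vector_derivative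
      ((rho0 z - rho1 z) * inverse (rho0 z) * dirderiv u (cone_path (t, z)) (fst z, 0))) (at t)"
proof -
  let ?k = "(rho0 z - rho1 z) * inverse (rho0 z)"
  let ?V = "?k *\<^sub>R (fst z, 0::complex^'n)"
  have dg: "((\<lambda>t. cone_path (t, z)) has_derivative (\<lambda>s. s *\<^sub>R ?V)) (at t)"
    by (subst cone_path_affine) (auto intro!: derivative_eq_intros)
  have "cone_path (t, z) \<in> - {0}" using cone_path_nonzero[of "(t, z)"] z by simp
  then have du: "(u has_derivative dirderiv u (cone_path (t, z))) (at (cone_path (t, z)))"
    using smooth_on_differentiable_at[OF u] frechet_derivative_works by blast
  have lin: "linear (dirderiv u (cone_path (t, z)))" using du has_derivative_linear by blast
  have "((\<lambda>t. u (cone_path (t, z))) has_derivative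
      (\<lambda>s. dirderiv u (cone_path (t, z)) (s *\<^sub>R ?V))) (at t)"
    using has_derivative_compose[OF dg du] by (simp add: o_def)
  moreover have "dirderiv u (cone_path (t, z)) (s *\<^sub>R ?V)
      = s *\<^sub>R (?k * dirderiv u (cone_path (t, z)) (fst z, 0))" for s
    unfolding linear_scale[OF lin] by simp
  ultimately show ?thesis unfolding has_vector_derivative_def by simp
qed

lemma eq_integral_along_cone_path:
  assumes z: "z \<in> both_nonzero" and u0: "\<forall>z\<in>nullcone. u z = 0"
  shows "u z = (rho0 z - rho1 z) * inverse (rho0 z)
     * integral {0..1} (\<lambda>t. dirderiv u (cone_path (t, z)) (fst z, 0))"
proof -
  let ?k = "(rho0 z - rho1 z) * inverse (rho0 z)"
  let ?G = "\<lambda>t. dirderiv u (cone_path (t, z)) (fst z, 0)"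
  have "((\<lambda>t. ?k * ?G t) has_integral (u (cone_path (1, z)) - u (cone_path (0, z)))) {0..1}"
    by (rule fundamental_theorem_of_calculus)
      (auto intro: has_vector_derivative_at_within[OF has_vector_derivative_along_cone_path[OF z]])
  then have "((\<lambda>t. ?k * ?G t) has_integral u z) {0..1}"
    using cone_path_1[OF z] cone_path_0_in_nullcone[OF z] u0 by simp
  moreover have "continuous_on {0..1} (\<lambda>t. (\<lambda>p. dirderiv u (cone_path p) (fst (snd p), 0)) (t, z))"
    by (rule continuous_on_compose2[OF smooth_on_continuous_on[OF smooth_on_cone_path_integrand]])
      (use z in \<open>auto intro!: continuous_intros\<close>)
  then have "((\<lambda>t. ?k * ?G t) has_integral ?k * integral {0..1} ?G) {0..1}"
    by (intro has_integral_mult_right integrable_integral integrable_continuous_real) simp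
  ultimately show ?thesis by (rule has_integral_unique)
qed

context
  assumes u0: "\<forall>z\<in>nullcone. u z = 0"
begin

lemma div_Lform_eq_hadamard_quotient:
  assumes z: "z \<in> both_nonzero"
  shows "div_Lform u z = hadamard_quotient u z"
proof (cases "Lform z = 0")
  case False
  have "0 < rho0 z" "0 < rho1 z" using z by auto
  moreover have "rho0 z - rho1 z \<noteq> 0" using False unfolding Lform_eq_rho by simp
  ultimately show ?thesis
    using False
    unfolding div_Lform_def hadamard_quotient_def eq_integral_along_cone_path[OF z u0] Lform_eq_rho
    by (simp add: divide_inverse ac_simps)
qed (simp add: div_Lform_def)

lemma smooth_on_div_Lform: "smooth_on (- {0}) (div_Lform u)"
proof (rule smooth_on_local[OF open_nonzero])
  fix x :: "'n pt" assume x: "x \<in> - {0}"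
  show "\<exists>T. open T \<and> x \<in> T \<and> smooth_on T (div_Lform u)"
  proof (cases "Lform x = 0")
    case True
    then have "x \<in> nullcone" using x by (simp add: nullcone_def)
    then have "x \<in> both_nonzero" by (rule nullcone_subset_both_nonzero)
    moreover have "smooth_on both_nonzero (div_Lform u)"
      by (rule smooth_on_cong[OF smooth_on_hadamard_quotient])
        (simp add: div_Lform_eq_hadamard_quotient)
    ultimately show ?thesis using open_both_nonzero by blast
  next
    case False
    define T :: "'n pt set" where "T = - {0} \<inter> Lform -` (- {0})"
    have T: "open T" "T \<subseteq> - {0}"
      using continuous_open_preimage[OF smooth_on_continuous_on[OF smooth_on_Lform[OF open_nonzero]]
          open_nonzero, of "- {0}"]
      by (auto simp: T_def)
    have "smooth_on T (\<lambda>z. u z / Lform z)"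
      by (rule smooth_on_divide[OF smooth_on_open_subset[OF u T] smooth_on_Lform[OF T(1)]])
        (simp add: T_def)
    then have "smooth_on T (div_Lform u)"
      by (rule smooth_on_cong) (simp add: T_def div_Lform_def)
    moreover have "x \<in> T" using x False by (simp add: T_def)
    ultimately show ?thesis using T(1) by blast
  qed
qed

lemma Lform_mult_div_Lform:
  assumes z: "z \<noteq> 0"
  shows "u z = Lform z * div_Lform u z"
proof (cases "Lform z = 0")
  case True
  then have "z \<in> nullcone" using z by (simp add: nullcone_def)
  then show ?thesis using u0 True by simp
qed (simp add: div_Lform_def)

end

end

section \<open>Existence and uniqueness of the extension\<close>

definition approx_ext :: "('n::finite pt \<Rightarrow> real) \<Rightarrow> nat \<Rightarrow> ('n pt \<Rightarrow> real) \<Rightarrow> bool" where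
  "approx_ext f k F \<longleftrightarrow> smooth_on (- {0}) F \<and> homog00 F \<and> (\<forall>z\<in>nullcone. F z = f z)
     \<and> bigOL k (Delta F)"

lemma good_ext_iff_approx_ext:
  fixes F :: "'n::finite pt \<Rightarrow> real"
  shows "good_ext f F \<longleftrightarrow> approx_ext f (CARD('n) - 1) F"
  by (simp add: good_ext_def approx_ext_def)

lemma approx_ext_initial_ext:
  assumes "f \<in> Espace"
  shows "approx_ext f 0 (initial_ext f)"
proof -
  have "bigOL 0 (Delta (initial_ext f))"
    unfolding bigOL_def using smooth_on_Delta[OF smooth_on_initial_ext[OF assms]] by auto
  then show ?thesis
    using smooth_on_initial_ext[OF assms] homog00_initial_ext[OF assms]
      initial_ext_nullcone[OF assms]
    by (simp add: approx_ext_def)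
qed

lemma homog00_Lform_power_mult:
  fixes e :: "'n::finite pt \<Rightarrow> real"
  assumes "homog_neg k e"
  shows "homog00 (\<lambda>z. Lform z ^ k * e z)"
  unfolding homog00_def
proof (intro allI impI)
  fix z :: "'n pt" and c :: complex
  assume "z \<noteq> 0" "c \<noteq> 0"
  then have "((cmod c)^2)^k * e (cscale c z) = e z"
    using assms unfolding homog_neg_def power_mult by blast
  then show "Lform (cscale c z) ^ k * e (cscale c z) = Lform z ^ k * e z"
    by (simp add: Lform_cscale power_mult_distrib mult_ac)
qed

lemma approx_ext_Suc:
  assumes F: "approx_ext f k F" and k: "Suc k < CARD('n)"
  shows "\<exists>F'. approx_ext f (Suc k) (F' :: 'n::finite pt \<Rightarrow> real)"
proof -
  let ?m = "Suc k"
  have sF: "smooth_on (- {0}) F" and hF: "homog00 F" and nF: "\<forall>z\<in>nullcone. F z = f z"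
    using F by (auto simp: approx_ext_def)
  obtain e where e: "smooth_on (- {0}) e" "\<And>z. z \<noteq> 0 \<Longrightarrow> Delta F z = Lform z ^ k * e z"
    using F unfolding approx_ext_def bigOL_def by blast
  have he: "homog_neg ?m e"
    using homog_neg_quotient[OF homog_neg_Delta[OF sF hF] smooth_on_continuous_on[OF e(1)] e(2)]
    by simp
  define c where "c = inverse (real ?m * (real CARD('n) - real ?m))"
  have c: "c * (real ?m * (real CARD('n) - real ?m)) = 1"
    using k unfolding c_def by (intro left_inverse) simp
  define F' where "F' = (\<lambda>z. F z - c * (Lform z ^ ?m * e z))"
  have sLe: "smooth_on (- {0}) (\<lambda>z::'n pt. Lform z ^ ?m * e z)"
    by (intro smooth_on_mult smooth_on_power smooth_on_Lform open_nonzero e(1))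
  have "Delta F' x = Lform x ^ ?m * (- c * Delta e x)" if x: "x \<noteq> 0" for x
  proof -
    have "Delta F' x = Lform x ^ k * e x
        - c * (real ?m * (real CARD('n) - real ?m) * Lform x ^ k * e x + Lform x ^ ?m * Delta e x)"
      using Delta_diff_cmult[OF sF sLe, of x c] Delta_Lform_power_mult[OF e(1) he x] e(2)[OF x] x
      by (simp add: F'_def)
    also have "\<dots> = Lform x ^ ?m * (- c * Delta e x)"
    proof -
      have "c * (real ?m * (real CARD('n) - real ?m) * Lform x ^ k * e x) = Lform x ^ k * e x"
        using c by (simp only: mult.assoc[symmetric])
      then show ?thesis by (simp only: distrib_left) (simp add: algebra_simps)
    qed
    finally show ?thesis .
  qed
  then have "bigOL ?m (Delta F')"
    unfolding bigOL_def using smooth_on_cmult[OF smooth_on_Delta[OF e(1)], of "- c"] by blast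
  moreover have "smooth_on (- {0}) F'"
    unfolding F'_def by (intro smooth_on_diff smooth_on_cmult sF sLe)
  moreover have "homog00 F'"
    using hF homog00_Lform_power_mult[OF he] by (simp add: homog00_def F'_def)
  moreover have "\<forall>z\<in>nullcone. F' z = f z"
    using nF by (simp add: F'_def nullcone_def)
  ultimately show ?thesis unfolding approx_ext_def by blast
qed

lemma approx_ext_exists:
  assumes "f \<in> Espace"
  shows "k < CARD('n) \<Longrightarrow> \<exists>F :: 'n::finite pt \<Rightarrow> real. approx_ext f k F"
proof (induction k)
  case 0
  show ?case using approx_ext_initial_ext[OF assms] by blast
next
  case (Suc k)
  then show ?case using approx_ext_Suc by (meson Suc_lessD)
qed

lemma vanishes_on_nullcone_if_Delta_Lform_power_mult:
  fixes e H :: "'n::finite pt \<Rightarrow> real"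
  assumes e: "smooth_on (- {0}) e" "homog_neg k e" and H: "smooth_on (- {0}) H"
    and Delta: "\<And>z. z \<noteq> 0 \<Longrightarrow> Delta (\<lambda>y. Lform y ^ k * e y) z = Lform z ^ (CARD('n) - 1) * H z"
    and k: "1 \<le> k" "k < CARD('n)"
  shows "\<forall>z\<in>nullcone. e z = 0"
proof
  let ?n = "CARD('n)"
  let ?q = "\<lambda>z. (Lform z ^ (?n - 1 - k) * H z - Delta e z) * inverse (real k * (real ?n - real k))"
  have "smooth_on (- {0}) ?q"
    by (intro smooth_on_mult smooth_on_diff smooth_on_power smooth_on_Lform open_nonzero H
        smooth_on_Delta e(1) smooth_on_const)
  moreover have "e z = Lform z * ?q z" if z: "z \<noteq> 0" and L: "Lform z \<noteq> 0" for z
  proof -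
    have "?n - 1 = (k - 1) + (1 + (?n - 1 - k))" "k = (k - 1) + 1" using k by simp_all
    then have pw: "Lform z ^ (?n - 1) = Lform z ^ (k - 1) * (Lform z * Lform z ^ (?n - 1 - k))"
      "Lform z ^ k = Lform z ^ (k - 1) * Lform z"
      by (metis power_add power_one_right)+
    have "real k * (real ?n - real k) * Lform z ^ (k - 1) * e z
        = Lform z ^ (?n - 1) * H z - Lform z ^ k * Delta e z"
      using Delta[OF z] Delta_Lform_power_mult[OF e z k(1)] by simp
    then have "Lform z ^ (k - 1) * (real k * (real ?n - real k) * e z)
        = Lform z ^ (k - 1) * (Lform z * (Lform z ^ (?n - 1 - k) * H z - Delta e z))"
      unfolding pw by (simp add: algebra_simps)
    then have "real k * (real ?n - real k) * e z
        = Lform z * (Lform z ^ (?n - 1 - k) * H z - Delta e z)"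
      using L by simp
    then show ?thesis using k by (simp add: field_simps)
  qed
  ultimately show "e z = 0" if "z \<in> nullcone" for z
    using vanishes_on_nullcone_if_Lform_multiple[OF smooth_on_continuous_on[OF e(1)]
        smooth_on_continuous_on] that
    by blast
qed

lemma bigOL_Suc_if_Delta:
  fixes G H h :: "'n::finite pt \<Rightarrow> real"
  assumes G: "homog00 G" "\<And>z. z \<noteq> 0 \<Longrightarrow> Delta G z = Lform z ^ (CARD('n) - 1) * H z"
    and H: "smooth_on (- {0}) H"
    and h: "smooth_on (- {0}) h" "\<And>z. z \<noteq> 0 \<Longrightarrow> G z = Lform z ^ k * h z"
    and k: "1 \<le> k" "k < CARD('n)"
  shows "bigOL (Suc k) G"
proof -
  have hh: "homog_neg k h"
    using homog_neg_quotient[of 0 G h k] G(1) h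
    by (simp add: homog_neg_0_iff smooth_on_continuous_on)
  have "Delta (\<lambda>y. Lform y ^ k * h y) z = Lform z ^ (CARD('n) - 1) * H z" if "z \<noteq> 0" for z
    using Delta_cong_open[OF open_nonzero, of z G "\<lambda>y. Lform y ^ k * h y"] G(2) h(2) that by simp
  then have "\<forall>z\<in>nullcone. h z = 0"
    by (rule vanishes_on_nullcone_if_Delta_Lform_power_mult[OF h(1) hh H _ k])
  then show ?thesis
    unfolding bigOL_def
    using smooth_on_div_Lform[OF h(1)] Lform_mult_div_Lform[OF h(1)] h(2) by auto
qed

lemma good_ext_unique:
  assumes F: "good_ext f F" and F': "good_ext f F'"
  shows "bigOL (CARD('n)) (\<lambda>z::'n::finite pt. F z - F' z)"
proof -
  let ?n = "CARD('n)"
  let ?G = "\<lambda>z. F z - F' z"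
  obtain H H' where H: "smooth_on (- {0}) H" "\<And>z. z \<noteq> 0 \<Longrightarrow> Delta F z = Lform z ^ (?n - 1) * H z"
    and H': "smooth_on (- {0}) H'" "\<And>z. z \<noteq> 0 \<Longrightarrow> Delta F' z = Lform z ^ (?n - 1) * H' z"
    using F F' unfolding good_ext_def bigOL_def by blast
  have sF: "smooth_on (- {0}) F" and sF': "smooth_on (- {0}) F'"
    using F F' by (auto simp: good_ext_def)
  have sG: "smooth_on (- {0}) ?G" by (rule smooth_on_diff[OF sF sF'])
  have hG: "homog00 ?G" using F F' by (simp add: good_ext_def homog00_def)
  have DG: "Delta ?G z = Lform z ^ (?n - 1) * (H z - H' z)" if "z \<noteq> 0" for z
    using Delta_diff_cmult[OF sF sF', of z 1] H(2)[OF that] H'(2)[OF that] that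
    by (simp add: algebra_simps)
  have "bigOL k ?G" if "1 \<le> k" "k \<le> ?n" for k
    using that
  proof (induction k rule: dec_induct)
    case base
    have "\<forall>z\<in>nullcone. ?G z = 0" using F F' by (simp add: good_ext_def)
    then show ?case
      unfolding bigOL_def using smooth_on_div_Lform[OF sG] Lform_mult_div_Lform[OF sG] by auto
  next
    case (step k)
    then obtain h where "smooth_on (- {0}) h" "\<And>z. z \<noteq> 0 \<Longrightarrow> ?G z = Lform z ^ k * h z"
      unfolding bigOL_def by auto
    then show ?case
      using bigOL_Suc_if_Delta[OF hG DG smooth_on_diff[OF H(1) H'(1)]] step by auto
  qed
  then show ?thesis using good_ext_def F by (cases "?n") auto
qed

theorem mainTheorem3:
  fixes f :: "complex \<times> (complex ^ 'n::finite) \<Rightarrow> real"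
  assumes "CARD('n) \<ge> 2" and "f \<in> Espace"
  shows "(\<exists>F. good_ext f F) \<and>
         (\<forall>F F'. good_ext f F \<and> good_ext f F' \<longrightarrow> bigOL (CARD('n)) (\<lambda>z. F z - F' z))"
  using approx_ext_exists[OF assms(2), of "CARD('n) - 1"] assms(1) good_ext_unique
  by (auto simp: good_ext_iff_approx_ext)
end
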